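(* For every $k\in\{1,\dots,d-1\}$, every $l\in\{k,\dots,d\}$, every $S\in\Delta_l(\hat T)$ and every $n\in\{1,\dots,N^{k-1}_S\}$, $$\phi^{k,\mathrm{II}}_{S,n}=\mathrm d^{k-1}\phi^{k-1,\mathrm I}_{S,n},$$ where $\phi^{k-1,\mathrm I}_{S,n}$ is the type-I basis function of $X^{k-1}(\hat T)$ and $\phi^{k,\mathrm{II}}_{S,n}$ the type-II basis function of $X^k(\hat T)$.
   Context: Let $d\in\{2,3\}$ and let $\hat T\subset\mathbb R^d$ be an equilateral reference simplex; $\Delta_l(\hat T)$ denotes its $l$-dimensional subsimplices, $(\cdot,\cdot)_S$ the $L^2(S)$ inner product. Exterior derivatives $\mathrm d^0=\nabla,\mathrm d^1=\nabla\times,\mathrm d^2=\nabla\cdot,\mathrm d^3=0$ (3D; analogous in 2D). Fix an exact polynomial complex $X^0(\hat T)\to\cdots\to X^d(\hat T)\to0$ given by one of the standard first-kind, second-kind or hybrid finite element subcomplexes of the $L^2$ de Rham complex. Traces $\mathrm{tr}^k_S$: restriction ($k=0$), tangential projection ($k=1$), normal component ($k=2$ on a face), identity on $\hat T$. Surface derivatives $\mathrm d^k_S$ satisfy $\mathrm d^k_S\mathrm{tr}^k_Sv=\mathrm{tr}^{k+1}_S\mathrm d^kv$ and $\mathrm d^k_S\mathrm d^{k-1}_S=0$. For $\dim S\ge k+1$: $\mathring X^k(S)=\{\mathrm{tr}^k_Sv:v\in X^k(\hat T),\mathrm{tr}^k_{\partial S}v=0\}$; $\mathring X^{k,\mathrm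 I}(S)$ is the $L^2(S)$-orthogonal complement in $\mathring X^k(S)$ of $\ker\mathrm d^k_S$; $N^k_S=\dim\mathring X^{k,\mathrm I}(S)$, $N^k_S=1$ if $\dim S=k$, $N^{-1}_S=0$. For each $m\in\{0,\dots,d-1\}$ and each $S$ fix a basis $\{\psi^m_{S,j}\}$ of $\mathring X^{m,\mathrm I}(S)$ with $(\mathrm d^m_S\psi^m_{S,j},\mathrm d^m_S\psi^m_{S,i})_S=\delta_{ij}$, $(\psi^m_{S,j},\psi^m_{S,i})_S=\lambda_{S,j}\delta_{ij}$; the same bases are used in the degrees of freedom of all spaces $X^m(\hat T)$. Degrees of freedom on $X^m(\hat T)$: $\ell^{m,\mathrm I}_{S,1}(v)=(1,\mathrm{tr}^m_Sv)_S$, $S\in\Delta_m(\hat T)$ (point evaluation if $m=0$); $\ell^{m,\mathrm I}_{S,j}(v)=(\mathrm d^m_S\psi^m_{S,j},\mathrm d^m_S\mathrm{tr}^m_Sv)_S$, $j\le N^m_S$, $\dim S\in\{m+1,\dots,d\}$; $\ell^{m,\mathrm{II}}_{S,j}(v)=(\mathrm d^{m-1}_S\psi^{m-1}_{S,j},\mathrm{tr}^m_Sv)_S$, $j\le N^{m-1}_S$, $\dim S\in\{m,\dots,d\}$. They are unisolvent; $\{\phi^{m,\mathrm I}_{S,j},\phi^{m,\mathrm{II}}_{S,n}\}$ denotes the dual basis of $X^m(\hat T)$. *)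

theory Defs
  imports "HOL-Analysis.Analysis"
begin

text \<open>Differential k-forms on R^d are represented as functions
  x \<mapsto> (list of vectors \<mapsto> value); a k-form takes the value 0 on lists
  of length different from k and is multilinear and alternating on lists of
  length k.\<close>

type_synonym ('n) form = "real^('n::finite) \<Rightarrow> (real^'n) list \<Rightarrow> real"

definition drop_nth :: "nat \<Rightarrow> 'a list \<Rightarrow> 'a list" where
  "drop_nth i xs = take i xs @ drop (Suc i) xs"

definition dirderiv :: "(real^('n::finite) \<Rightarrow> real) \<Rightarrow> real^'n \<Rightarrow> real^'n \<Rightarrow> real" where
  "dirderiv f x v = deriv (\<lambda>t. f (x + t *\<^sub>R v)) 0"

definition extd :: "nat \<Rightarrow> ('n::finite) form \<Rightarrow> 'n form" where
  "extd k \<omega> = (\<lambda>x vs. if length vs = Suc k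
      then (\<Sum>i<Suc k. (-1)^i * dirderiv (\<lambda>y. \<omega> y (drop_nth i vs)) x (vs!i))
      else 0)"

definition alt_form :: "nat \<Rightarrow> ((real^('n::finite)) list \<Rightarrow> real) \<Rightarrow> bool" where
  "alt_form k a \<longleftrightarrow>
     (\<forall>vs. length vs \<noteq> k \<longrightarrow> a vs = 0) \<and>
     (\<forall>vs. length vs = k \<longrightarrow> (\<forall>i<k. linear (\<lambda>u. a (vs[i := u])))) \<and>
     (\<forall>vs. length vs = k \<longrightarrow> (\<forall>i<k. \<forall>j<k. i \<noteq> j \<and> vs!i = vs!j \<longrightarrow> a vs = 0))"

definition poly_form :: "nat \<Rightarrow> ('n::finite) form \<Rightarrow> bool" where
  "poly_form k \<omega> \<longleftrightarrow> (\<forall>x. alt_form k (\<omega> x)) \<and>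
     (\<forall>vs. real_polynomial_function (\<lambda>x. \<omega> x vs))"

definition ref_simplex :: "(nat \<Rightarrow> real^('n::finite)) \<Rightarrow> bool" where
  "ref_simplex p \<longleftrightarrow> inj_on p {..CARD('n)} \<and> \<not> affine_dependent (p ` {..CARD('n)}) \<and>
     (\<exists>h>0. \<forall>i\<le>CARD('n). \<forall>j\<le>CARD('n). i \<noteq> j \<longrightarrow> dist (p i) (p j) = h)"

text \<open>l-dimensional subsimplices, represented by their vertex index sets.\<close>
definition Delta :: "nat \<Rightarrow> nat \<Rightarrow> nat set set" where
  "Delta d l = {V. V \<subseteq> {..d} \<and> card V = Suc l}"

definition simp_set :: "(nat \<Rightarrow> real^('n::finite)) \<Rightarrow> nat set \<Rightarrow> (real^'n) set" where
  "simp_set p V = convex hull (p ` V)"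

definition tang :: "(nat \<Rightarrow> real^('n::finite)) \<Rightarrow> nat set \<Rightarrow> (real^'n) set" where
  "tang p V = span {p j - p i | i j. i \<in> V \<and> j \<in> V}"

definition onb :: "(nat \<Rightarrow> real^('n::finite)) \<Rightarrow> nat set \<Rightarrow> (real^'n) list" where
  "onb p V = (SOME B. length B = card V - 1 \<and> set B \<subseteq> tang p V \<and>
      (\<forall>i<length B. \<forall>j<length B. B!i \<bullet> B!j = (if i = j then 1 else 0)))"

text \<open>Integral over the subsimplex w.r.t. its (card V - 1)-dimensional
  surface measure, via an isometric parametrisation (point evaluation if
  the subsimplex is a vertex).\<close>
definition sint :: "(nat \<Rightarrow> real^('n::finite)) \<Rightarrow> nat set \<Rightarrow> (real^'n \<Rightarrow> real) \<Rightarrow> real" where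
  "sint p V f = (let B = onb p V; l = card V - 1; x0 = p (Min V) in
     integral\<^sup>L (PiM {..<l} (\<lambda>_. lborel))
       (\<lambda>t. indicator (simp_set p V) (x0 + (\<Sum>i<l. t i *\<^sub>R B!i))
            * f (x0 + (\<Sum>i<l. t i *\<^sub>R B!i))))"

definition finner :: "(nat \<Rightarrow> real^('n::finite)) \<Rightarrow> nat set \<Rightarrow> nat \<Rightarrow>
    ((real^'n) list \<Rightarrow> real) \<Rightarrow> ((real^'n) list \<Rightarrow> real) \<Rightarrow> real" where
  "finner p V k a b = (let B = onb p V in
     \<Sum>I\<in>{I. I \<subseteq> {..<card V - 1} \<and> card I = k}.
        a (map (\<lambda>i. B!i) (sorted_list_of_set I)) * b (map (\<lambda>i. B!i) (sorted_list_of_set I)))"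

definition l2 :: "(nat \<Rightarrow> real^('n::finite)) \<Rightarrow> nat set \<Rightarrow> nat \<Rightarrow> 'n form \<Rightarrow> 'n form \<Rightarrow> real" where
  "l2 p V k \<omega> \<eta> = sint p V (\<lambda>x. finner p V k (\<omega> x) (\<eta> x))"

definition tr_eq :: "(nat \<Rightarrow> real^('n::finite)) \<Rightarrow> nat set \<Rightarrow> nat \<Rightarrow> 'n form \<Rightarrow> 'n form \<Rightarrow> bool" where
  "tr_eq p V k \<omega> \<eta> \<longleftrightarrow> (\<forall>x\<in>simp_set p V. \<forall>vs. length vs = k \<and> set vs \<subseteq> tang p V \<longrightarrow> \<omega> x vs = \<eta> x vs)"

definition tr_zero :: "(nat \<Rightarrow> real^('n::finite)) \<Rightarrow> nat set \<Rightarrow> nat \<Rightarrow> 'n form \<Rightarrow> bool" where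
  "tr_zero p V k \<omega> \<longleftrightarrow> tr_eq p V k \<omega> (\<lambda>x vs. 0)"

definition bdry_tr_zero :: "(nat \<Rightarrow> real^('n::finite)) \<Rightarrow> nat set \<Rightarrow> nat \<Rightarrow> 'n form \<Rightarrow> bool" where
  "bdry_tr_zero p V k \<omega> \<longleftrightarrow> (\<forall>F. F \<subseteq> V \<and> card F + 1 = card V \<longrightarrow> tr_zero p F k \<omega>)"

text \<open>Representatives (elements of X^k) of the spaces ring-X^k(S) and ring-X^{k,I}(S);
  d^k_S tr^k_S w = tr^{k+1}_S d^k w.\<close>
definition ring_sp :: "(nat \<Rightarrow> real^('n::finite)) \<Rightarrow> (nat \<Rightarrow> 'n form set) \<Rightarrow> nat \<Rightarrow> nat set \<Rightarrow> 'n form set" where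
  "ring_sp p X k V = {v \<in> X k. bdry_tr_zero p V k v}"

definition ringI_sp :: "(nat \<Rightarrow> real^('n::finite)) \<Rightarrow> (nat \<Rightarrow> 'n form set) \<Rightarrow> nat \<Rightarrow> nat set \<Rightarrow> 'n form set" where
  "ringI_sp p X k V = {v \<in> ring_sp p X k V. \<forall>w\<in>ring_sp p X k V.
      tr_zero p V (Suc k) (extd k w) \<longrightarrow> l2 p V k v w = 0}"

definition psi_basis :: "(nat \<Rightarrow> real^('n::finite)) \<Rightarrow> (nat \<Rightarrow> 'n form set) \<Rightarrow> nat \<Rightarrow> nat set \<Rightarrow> nat
    \<Rightarrow> (nat \<Rightarrow> 'n form) \<Rightarrow> bool" where
  "psi_basis p X m V N \<psi> \<longleftrightarrow>
     (\<forall>j\<in>{1..N}. \<psi> j \<in> ringI_sp p X m V) \<and>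
     (\<forall>c. tr_zero p V m (\<lambda>x vs. \<Sum>j=1..N. c j * \<psi> j x vs) \<longrightarrow> (\<forall>j\<in>{1..N}. c j = 0)) \<and>
     (\<forall>v\<in>ringI_sp p X m V. \<exists>c. tr_eq p V m v (\<lambda>x vs. \<Sum>j=1..N. c j * \<psi> j x vs)) \<and>
     (\<forall>i\<in>{1..N}. \<forall>j\<in>{1..N}.
        l2 p V (Suc m) (extd m (\<psi> j)) (extd m (\<psi> i)) = (if i = j then 1 else 0)) \<and>
     (\<exists>lam. \<forall>i\<in>{1..N}. \<forall>j\<in>{1..N}. l2 p V m (\<psi> j) (\<psi> i) = (if i = j then lam j else 0))"

definition poly_complex :: "nat \<Rightarrow> (nat \<Rightarrow> ('n::finite) form set) \<Rightarrow> bool" where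
  "poly_complex d X \<longleftrightarrow>
     (\<forall>m\<le>d. (\<lambda>x vs. 0) \<in> X m \<and>
        (\<forall>v\<in>X m. \<forall>w\<in>X m. (\<lambda>x vs. v x vs + w x vs) \<in> X m) \<and>
        (\<forall>c. \<forall>v\<in>X m. (\<lambda>x vs. c * v x vs) \<in> X m) \<and>
        (\<forall>v\<in>X m. poly_form m v)) \<and>
     (\<forall>m<d. extd m ` X m \<subseteq> X (Suc m)) \<and>
     {v \<in> X 0. extd 0 v = (\<lambda>x vs. 0)} = {(\<lambda>x vs. if vs = [] then c else 0) | c. True} \<and>
     (\<forall>m. 1 \<le> m \<and> m \<le> d \<longrightarrow> {v \<in> X m. extd m v = (\<lambda>x vs. 0)} = extd (m - 1) ` X (m - 1))"

text \<open>Degrees of freedom of X^m: (TI, S, 1) with dim S = m is (1, tr S v)_S;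
  (TI, S, j) with dim S \<ge> m+1 is ell^{m,I}_{S,j}; (TII, S, j) is ell^{m,II}_{S,j}.\<close>
datatype dofk = TI | TII

definition dof_idx :: "nat \<Rightarrow> (nat \<Rightarrow> nat set \<Rightarrow> nat) \<Rightarrow> nat \<Rightarrow> (dofk \<times> nat set \<times> nat) set" where
  "dof_idx d N m =
     {(TI, V, 1) | V. V \<in> Delta d m}
   \<union> {(TI, V, j) | V j. (\<exists>l. m + 1 \<le> l \<and> l \<le> d \<and> V \<in> Delta d l) \<and> 1 \<le> j \<and> j \<le> N m V}
   \<union> {(TII, V, j) | V j. 1 \<le> m \<and> (\<exists>l. m \<le> l \<and> l \<le> d \<and> V \<in> Delta d l) \<and> 1 \<le> j \<and> j \<le> N (m - 1) V}"

definition dof :: "(nat \<Rightarrow> real^('n::finite)) \<Rightarrow> (nat \<Rightarrow> nat set \<Rightarrow> nat \<Rightarrow> 'n form) \<Rightarrow> nat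
    \<Rightarrow> dofk \<times> nat set \<times> nat \<Rightarrow> 'n form \<Rightarrow> real" where
  "dof p \<psi> m i v = (case i of
      (TI, V, j) \<Rightarrow> (if card V = Suc m then sint p V (\<lambda>x. v x (onb p V))
                     else l2 p V (Suc m) (extd m (\<psi> m V j)) (extd m v))
    | (TII, V, j) \<Rightarrow> l2 p V m (extd (m - 1) (\<psi> (m - 1) V j)) v)"

definition unisolvent :: "(nat \<Rightarrow> real^('n::finite)) \<Rightarrow> (nat \<Rightarrow> 'n form set) \<Rightarrow> (nat \<Rightarrow> nat set \<Rightarrow> nat \<Rightarrow> 'n form)
    \<Rightarrow> (nat \<Rightarrow> nat set \<Rightarrow> nat) \<Rightarrow> nat \<Rightarrow> bool" where
  "unisolvent p X \<psi> N m \<longleftrightarrow>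
     (\<forall>c. \<exists>!v. v \<in> X m \<and> (\<forall>i\<in>dof_idx CARD('n) N m. dof p \<psi> m i v = c i))"

definition dual_basis :: "(nat \<Rightarrow> real^('n::finite)) \<Rightarrow> (nat \<Rightarrow> 'n form set) \<Rightarrow> (nat \<Rightarrow> nat set \<Rightarrow> nat \<Rightarrow> 'n form)
    \<Rightarrow> (nat \<Rightarrow> nat set \<Rightarrow> nat) \<Rightarrow> nat \<Rightarrow> dofk \<times> nat set \<times> nat \<Rightarrow> 'n form" where
  "dual_basis p X \<psi> N m i = (THE v. v \<in> X m \<and>
     (\<forall>i'\<in>dof_idx CARD('n) N m. dof p \<psi> m i' v = (if i' = i then 1 else 0)))"

end

theory Submission
  imports Defs
begin

(* Let \<phi> be the type-I basis function of X^{k-1} attached to (S, n) and w = d^{k-1} \<phi>, which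
   lies in X^k. It suffices to show that w has the degrees of freedom of the type-II basis
   function of X^k attached to (S, n). A type-II functional of w pairs d \<psi>^{k-1}_{S',j} with
   d \<phi> on S', which is literally the type-I functional of \<phi> indexed by (S', j). The type-I
   functionals of w on subsimplices of dimension > k vanish because d^k w = 0. The integral
   of w over a k-simplex equals, by Stokes' theorem, a signed sum of the integrals of \<phi> over
   its facets; these are degrees of freedom of \<phi> not attached to S, hence zero. Since
   k \<le> d - 1 \<le> 2, Stokes' theorem is needed only on edges (fundamental theorem of calculus)
   and on triangles (Green's theorem on the unit triangle after an affine change of
   variables). *)

section \<open>Orthonormal frames of edges and triangles\<close>

lemma orthonormal_pair_expansion:
  fixes b1 b2 x :: "'a::real_inner"
  assumes "b1 \<bullet> b1 = 1" "b2 \<bullet> b2 = 1" "b1 \<bullet> b2 = 0" "x \<in> span {b1, b2}"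
  shows "x = (x \<bullet> b1) *\<^sub>R b1 + (x \<bullet> b2) *\<^sub>R b2"
proof -
  obtain k1 where "x - k1 *\<^sub>R b1 \<in> span {b2}"
    using assms(4) span_breakdown_eq by blast
  then obtain k2 where "x - k1 *\<^sub>R b1 = k2 *\<^sub>R b2"
    by (auto simp: span_singleton)
  then have x: "x = k1 *\<^sub>R b1 + k2 *\<^sub>R b2"
    by (simp add: algebra_simps)
  have "x \<bullet> b1 = k1" "x \<bullet> b2 = k2"
    using assms(1-3) by (auto simp: x inner_add_left inner_commute[of b2 b1])
  with x show ?thesis by simp
qed

lemma span_orthonormal_pair_eq:
  fixes b1 b2 u w :: "'a::euclidean_space"
  assumes "b1 \<bullet> b1 = 1" "b2 \<bullet> b2 = 1" "b1 \<bullet> b2 = 0"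
    and "b1 \<in> span {u, w}" "b2 \<in> span {u, w}"
  shows "span {b1, b2} = span {u, w}"
proof -
  have ne: "b1 \<noteq> b2"
    using assms(1,3) by auto
  have "independent {b1, b2}"
    by (rule pairwise_orthogonal_independent)
       (use assms(1-3) ne in \<open>auto simp: pairwise_def orthogonal_def inner_commute\<close>)
  then have "dim {b1, b2} = 2"
    using dim_eq_card_independent ne by fastforce
  moreover have "dim (span {u, w}) \<le> card {u, w}"
    by (rule dim_le_card) auto
  moreover have "card {u, w} \<le> 2"
    by (simp add: card_insert_le_m1)
  ultimately have "span {b1, b2} = span (span {u, w})"
    by (intro dim_eq_span) (use assms(4,5) in auto)
  then show ?thesis by simp
qed

lemma orthonormal_pair_in_span:
  fixes u w :: "'a::real_inner"
  assumes ind: "\<And>\<alpha> \<beta>. \<alpha> *\<^sub>R u + \<beta> *\<^sub>R w = 0 \<Longrightarrow> \<alpha> = 0 \<and> \<beta> = 0"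
  obtains b1 b2 where "b1 \<bullet> b1 = 1" "b2 \<bullet> b2 = 1" "b1 \<bullet> b2 = 0"
    "b1 \<in> span {u, w}" "b2 \<in> span {u, w}"
proof -
  have u: "u \<noteq> 0"
    using ind[of 1 0] by auto
  define b1 where "b1 = u /\<^sub>R norm u"
  define w' where "w' = w - (w \<bullet> b1) *\<^sub>R b1"
  have w': "w' \<noteq> 0"
  proof
    assume "w' = 0"
    then have "w = ((w \<bullet> b1) / norm u) *\<^sub>R u"
      by (simp add: w'_def b1_def divide_inverse)
    then have "(- ((w \<bullet> b1) / norm u)) *\<^sub>R u + 1 *\<^sub>R w = 0"
      by simp
    then show False
      using ind[of "- ((w \<bullet> b1) / norm u)" 1] by simp
  qed
  define b2 where "b2 = w' /\<^sub>R norm w'"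
  have b11: "b1 \<bullet> b1 = 1"
    using u by (simp add: b1_def dot_square_norm power2_eq_square)
  have "b2 \<bullet> b2 = 1"
    using w' by (simp add: b2_def dot_square_norm power2_eq_square)
  moreover have "b1 \<bullet> b2 = 0"
    using b11 by (simp add: b2_def w'_def inner_diff_right inner_commute)
  moreover have b1_span: "b1 \<in> span {u, w}"
    by (simp add: b1_def span_base span_scale)
  moreover have "b2 \<in> span {u, w}"
    using b1_span by (simp add: b2_def w'_def span_base span_scale span_diff)
  ultimately show ?thesis
    using that b11 by blast
qed

lemma affine_independent_triangle_edges:
  fixes a b c :: "'a::real_vector"
  assumes "\<not> affine_dependent {a, b, c}" "a \<noteq> b" "a \<noteq> c" "b \<noteq> c"
    and "\<alpha> *\<^sub>R (b - a) + \<beta> *\<^sub>R (c - a) = 0"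
  shows "\<alpha> = 0 \<and> \<beta> = 0"
proof (rule ccontr)
  assume nz: "\<not> (\<alpha> = 0 \<and> \<beta> = 0)"
  define U where "U = (\<lambda>x. if x = a then - (\<alpha> + \<beta>) else if x = b then \<alpha> else \<beta>)"
  have "sum U {a, b, c} = 0"
    using assms(2-4) by (simp add: U_def)
  moreover have "(\<Sum>v\<in>{a, b, c}. U v *\<^sub>R v) = 0"
    using assms(2-5) by (simp add: U_def algebra_simps)
  moreover have "\<exists>v\<in>{a, b, c}. U v \<noteq> 0"
    using nz assms(2-4) by (auto simp: U_def)
  ultimately have "affine_dependent {a, b, c}"
    unfolding affine_dependent_explicit by (intro exI[of _ "{a, b, c}"] exI[of _ U]) auto
  with assms(1) show False by simp
qed

lemma independent_pair_coords_det_nonzero: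
  fixes u w b1 b2 :: "'a::real_vector"
  assumes ind: "\<And>\<alpha> \<beta>. \<alpha> *\<^sub>R u + \<beta> *\<^sub>R w = 0 \<Longrightarrow> \<alpha> = 0 \<and> \<beta> = 0"
    and u: "u = u0 *\<^sub>R b1 + u1 *\<^sub>R b2" and w: "w = w0 *\<^sub>R b1 + w1 *\<^sub>R b2"
  shows "u0 * w1 - u1 * w0 \<noteq> 0"
proof
  assume det: "u0 * w1 - u1 * w0 = 0"
  have "w1 *\<^sub>R u + (- u1) *\<^sub>R w = (u0 * w1 - u1 * w0) *\<^sub>R b1"
    by (simp add: u w algebra_simps)
  then have "u1 = 0"
    using ind[of w1 "- u1"] det by simp
  have "w0 *\<^sub>R u + (- u0) *\<^sub>R w = (u1 * w0 - u0 * w1) *\<^sub>R b2"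
    by (simp add: u w algebra_simps)
  then have "u0 = 0"
    using ind[of w0 "- u0"] det by simp
  show False
    using ind[of 1 0] \<open>u0 = 0\<close> \<open>u1 = 0\<close> by (simp add: u)
qed

lemma onb_orthonormal:
  fixes p :: "nat \<Rightarrow> real^'n::finite"
  assumes "length B = card V - 1" "set B \<subseteq> tang p V"
    and "\<forall>i<length B. \<forall>j<length B. B!i \<bullet> B!j = (if i = j then 1 else 0)"
  shows "length (onb p V) = card V - 1" and "set (onb p V) \<subseteq> tang p V"
    and "\<forall>i<length (onb p V). \<forall>j<length (onb p V).
           onb p V!i \<bullet> onb p V!j = (if i = j then 1 else 0)"
proof -
  define Q where "Q = (\<lambda>B. length B = card V - 1 \<and> set B \<subseteq> tang p V \<and>
      (\<forall>i<length B. \<forall>j<length B. B!i \<bullet> B!j = (if i = j then 1 else (0::real))))"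
  have "Q B"
    using assms by (simp add: Q_def)
  then have "Q (onb p V)"
    unfolding onb_def Q_def[symmetric] by (rule someI)
  then show "length (onb p V) = card V - 1" and "set (onb p V) \<subseteq> tang p V"
    and "\<forall>i<length (onb p V). \<forall>j<length (onb p V).
           onb p V!i \<bullet> onb p V!j = (if i = j then 1 else 0)"
    by (simp_all add: Q_def)
qed

lemma onb_singleton: "onb p {i} = []"
proof -
  have "length (onb p {i}) = card {i} - 1"
    by (rule onb_orthonormal(1)[of "[]"]) auto
  then show ?thesis by simp
qed

lemma tang_subset_span:
  assumes "\<And>x. x \<in> V \<Longrightarrow> p x - p a \<in> span W"
  shows "tang p V \<subseteq> span W"
proof -
  have "p j - p i \<in> span W" if "i \<in> V" "j \<in> V" for i j
    using span_diff[OF assms[OF that(2)] assms[OF that(1)]] by simp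
  then have "{p j - p i | i j. i \<in> V \<and> j \<in> V} \<subseteq> span W"
    by blast
  then show ?thesis
    unfolding tang_def by (rule span_minimal[OF _ subspace_span])
qed

lemma onb_edge:
  fixes p :: "nat \<Rightarrow> real^'n::finite"
  assumes "i \<noteq> j" "p i \<noteq> p j"
  obtains c where "onb p {i, j} = [c *\<^sub>R (p j - p i)]" "\<bar>c\<bar> * norm (p j - p i) = 1"
proof -
  define v where "v = p j - p i"
  have v: "v \<noteq> 0"
    using assms by (simp add: v_def)
  have "v \<in> tang p {i, j}"
    unfolding tang_def v_def by (rule span_base) auto
  then have "set [v /\<^sub>R norm v] \<subseteq> tang p {i, j}"
    by (simp add: tang_def span_scale)
  then have len: "length (onb p {i, j}) = 1" and sub: "set (onb p {i, j}) \<subseteq> tang p {i, j}"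
    and orth: "\<forall>a<length (onb p {i, j}). \<forall>b<length (onb p {i, j}).
                 onb p {i, j}!a \<bullet> onb p {i, j}!b = (if a = b then 1 else 0)"
    using onb_orthonormal[of "[v /\<^sub>R norm v]" "{i, j}" p] assms(1) v
    by (auto simp: dot_square_norm power2_eq_square)
  then obtain e where e: "onb p {i, j} = [e]"
    by (cases "onb p {i, j}") auto
  have "tang p {i, j} \<subseteq> span {v}"
    by (rule tang_subset_span[where a = i]) (auto simp: v_def span_base span_zero)
  then obtain c where c: "e = c *\<^sub>R v"
    using sub by (auto simp: e span_singleton)
  have "(\<bar>c\<bar> * norm v)\<^sup>2 = e \<bullet> e"
    by (simp add: c dot_square_norm power_mult_distrib power2_eq_square abs_mult_self_eq algebra_simps)
  also have "\<dots> = 1"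
    using orth by (simp add: e)
  finally have "\<bar>c\<bar> * norm v = 1"
    by (simp add: power2_eq_1_iff) (smt (verit) mult_nonneg_nonneg abs_ge_zero norm_ge_zero)
  with e c show ?thesis
    using that unfolding v_def by blast
qed

lemma onb_triangle:
  fixes p :: "nat \<Rightarrow> real^'n::finite"
  assumes "a \<noteq> b" "a \<noteq> c" "b \<noteq> c"
    and ind: "\<And>\<alpha> \<beta>. \<alpha> *\<^sub>R (p b - p a) + \<beta> *\<^sub>R (p c - p a) = 0 \<Longrightarrow> \<alpha> = 0 \<and> \<beta> = 0"
  obtains b1 b2 where "onb p {a, b, c} = [b1, b2]" "b1 \<bullet> b1 = 1" "b2 \<bullet> b2 = 1" "b1 \<bullet> b2 = 0"
    "p b - p a \<in> span {b1, b2}" "p c - p a \<in> span {b1, b2}"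
proof -
  define u where "u = p b - p a"
  define w where "w = p c - p a"
  have card: "card {a, b, c} - 1 = 2"
    using assms(1-3) by simp
  have tang_eq: "tang p {a, b, c} = span {u, w}"
  proof
    show "tang p {a, b, c} \<subseteq> span {u, w}"
      by (rule tang_subset_span[where a = a]) (auto simp: u_def w_def span_base span_zero)
    show "span {u, w} \<subseteq> tang p {a, b, c}"
      unfolding tang_def u_def w_def by (rule span_mono) blast
  qed
  obtain \<beta>1 \<beta>2 where \<beta>: "\<beta>1 \<bullet> \<beta>1 = 1" "\<beta>2 \<bullet> \<beta>2 = 1" "\<beta>1 \<bullet> \<beta>2 = 0"
    "\<beta>1 \<in> span {u, w}" "\<beta>2 \<in> span {u, w}"
    using orthonormal_pair_in_span[of u w] ind unfolding u_def w_def by blast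
  have "\<forall>i<2. \<forall>j<2. [\<beta>1, \<beta>2]!i \<bullet> [\<beta>1, \<beta>2]!j = (if i = j then 1 else (0::real))"
    using \<beta>(1-3) by (auto simp: less_2_cases_iff inner_commute)
  then have len: "length (onb p {a, b, c}) = 2" and sub: "set (onb p {a, b, c}) \<subseteq> span {u, w}"
    and orth: "\<forall>i<2. \<forall>j<2. onb p {a, b, c}!i \<bullet> onb p {a, b, c}!j = (if i = j then 1 else 0)"
    using onb_orthonormal[of "[\<beta>1, \<beta>2]" "{a, b, c}" p] \<beta>(4,5) card tang_eq by auto
  then obtain b1 b2 where B: "onb p {a, b, c} = [b1, b2]"
    by (auto simp: numeral_2_eq_2 length_Suc_conv)
  have on: "b1 \<bullet> b1 = 1" "b2 \<bullet> b2 = 1" "b1 \<bullet> b2 = 0"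
    using orth[rule_format, of 0 0] orth[rule_format, of 1 1] orth[rule_format, of 0 1] by (simp_all add: B)
  have "span {b1, b2} = span {u, w}"
    by (rule span_orthonormal_pair_eq) (use on sub B in auto)
  then show ?thesis
    using that B on span_base[of u "{u, w}"] span_base[of w "{u, w}"] by (simp add: u_def w_def)
qed

section \<open>Integrals over edges, triangles and the unit triangle\<close>

lemma integrable_indicator_times_continuous:
  fixes h :: "'a::euclidean_space \<Rightarrow> real"
  assumes "compact S" "continuous_on UNIV h"
  shows "integrable lborel (\<lambda>z. indicator S z * h z)"
  using borel_integrable_compact[OF assms(1) continuous_on_subset[OF assms(2)]] by simp

lemma integral_indicator_FTC:
  fixes F f :: "real \<Rightarrow> real"
  assumes "a \<le> b" "\<And>x. (F has_real_derivative f x) (at x)" "continuous_on UNIV f"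
  shows "(\<integral>x. indicator {a..b} x * f x \<partial>lborel) = F b - F a"
proof -
  have "(\<integral>x. indicator {a..b} x *\<^sub>R f x \<partial>lborel) = F b - F a"
    by (rule integral_FTC_atLeastAtMost[OF assms(1)])
       (use assms in \<open>auto simp: has_real_derivative_iff_has_vector_derivative[symmetric]
          intro: has_field_derivative_at_within continuous_on_subset\<close>)
  then show ?thesis by simp
qed

lemma integral_indicator_01_reflect:
  fixes f :: "real \<Rightarrow> real"
  shows "(\<integral>s. indicator {0..1} s * f s \<partial>lborel) = (\<integral>r. indicator {0..1} r * f (1 - r) \<partial>lborel)"
proof -
  have "(\<integral>s. indicator {0..1} s * f s \<partial>lborel) =
      \<bar>-1\<bar> *\<^sub>R (\<integral>r. indicator {0..1} (1 + -1 * r) * f (1 + -1 * r) \<partial>lborel)"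
    by (rule lborel_integral_real_affine) simp
  also have "(\<lambda>r. indicator {0..1} (1 + -1 * r) * f (1 + -1 * r)) = (\<lambda>r. indicator {0..1} r * f (1 - r))"
    by (auto simp: indicator_def)
  finally show ?thesis by simp
qed

lemma borel_measurable_indicator_comp_continuous:
  fixes a :: "'a::topological_space \<Rightarrow> 'b::topological_space" and G :: "'b \<Rightarrow> real"
  assumes "closed H" "continuous_on UNIV a" "continuous_on UNIV G"
  shows "(\<lambda>x. indicator H (a x) * G (a x)) \<in> borel_measurable borel"
proof -
  have a: "a \<in> borel_measurable borel"
    by (rule borel_measurable_continuous_onI[OF assms(2)])
  have "indicator H \<in> borel_measurable (borel :: 'b measure)"
    using assms(1) by (simp add: borel_closed)
  from measurable_comp[OF a this] have "(\<lambda>x. indicator H (a x) :: real) \<in> borel_measurable borel"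
    by (simp add: o_def)
  moreover have "(\<lambda>x. G (a x)) \<in> borel_measurable borel"
    by (rule borel_measurable_continuous_on[OF assms(3) a])
  ultimately show ?thesis
    by (rule borel_measurable_times)
qed

lemma sint_singleton: "sint p {i} f = f (p i)"
proof -
  have "sint p {i} f = (\<integral>t. indicator (convex hull {p i}) (p i) * f (p i)
      \<partial>PiM ({}::nat set) (\<lambda>_. lborel::real measure))"
    by (simp add: sint_def Let_def onb_singleton simp_set_def)
  also have "\<dots> = f (p i)"
    by (subst PiM_empty) (simp add: measure_count_space)
  finally show ?thesis .
qed

lemma affine_line_mem_convex_hull_2_iff:
  fixes a b :: "'a::real_vector"
  assumes "a \<noteq> b"
  shows "a + s *\<^sub>R (b - a) \<in> convex hull {a, b} \<longleftrightarrow> s \<in> {0..1}"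
proof
  assume "a + s *\<^sub>R (b - a) \<in> convex hull {a, b}"
  then obtain t where "0 \<le> t" "t \<le> 1" "a + s *\<^sub>R (b - a) = a + t *\<^sub>R (b - a)"
    unfolding convex_hull_2_alt by auto
  with assms show "s \<in> {0..1}"
    by (simp add: scaleR_cancel_right)
next
  assume "s \<in> {0..1}"
  then show "a + s *\<^sub>R (b - a) \<in> convex hull {a, b}"
    unfolding convex_hull_2_alt by auto
qed

lemma sint_edge:
  fixes p :: "nat \<Rightarrow> real^'n::finite"
  assumes ij: "i < j" and pij: "p i \<noteq> p j" and G: "continuous_on UNIV G"
  shows "sint p {i, j} G =
    norm (p j - p i) * (\<integral>s. indicator {0..1} s * G (p i + s *\<^sub>R (p j - p i)) \<partial>lborel)"
proof -
  define v where "v = p j - p i"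
  obtain c where e: "onb p {i, j} = [c *\<^sub>R v]" and c: "\<bar>c\<bar> * norm v = 1"
    using onb_edge[OF _ pij] ij unfolding v_def by blast
  have c0: "c \<noteq> 0"
    using c by auto
  define F where "F = (\<lambda>s. indicator (convex hull {p i, p j}) (p i + s *\<^sub>R (c *\<^sub>R v))
      * G (p i + s *\<^sub>R (c *\<^sub>R v)))"
  have "closed (convex hull {p i, p j})"
    by (simp add: compact_imp_closed compact_convex_hull)
  then have F: "F \<in> borel_measurable lborel"
    unfolding F_def
    using borel_measurable_indicator_comp_continuous[OF _ _ G, of _ "\<lambda>s. p i + s *\<^sub>R (c *\<^sub>R v)"]
    by (simp add: continuous_intros)
  have "card {i, j} = 2" "Min {i, j} = i"
    using ij by auto
  then have "sint p {i, j} G = (\<integral>t. F (t 0) \<partial>PiM {0::nat} (\<lambda>_. lborel))"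
    by (simp add: sint_def Let_def e lessThan_Suc F_def simp_set_def v_def insert_commute)
  also have "\<dots> = (\<integral>s. F s \<partial>lborel)"
  proof -
    interpret product_sigma_finite "\<lambda>_::nat. lborel::real measure" by standard
    show ?thesis by (rule product_integral_singleton[OF F])
  qed
  also have "\<dots> = \<bar>1 / c\<bar> *\<^sub>R (\<integral>s. F (0 + (1 / c) * s) \<partial>lborel)"
    by (rule lborel_integral_real_affine) (use c0 in simp)
  also have "(\<lambda>s. F (0 + (1 / c) * s)) = (\<lambda>s. indicator {0..1} s * G (p i + s *\<^sub>R v))"
  proof
    fix s
    have "F (0 + (1 / c) * s) = indicator (convex hull {p i, p j}) (p i + s *\<^sub>R (p j - p i))
        * G (p i + s *\<^sub>R (p j - p i))"
      using c0 by (simp add: F_def v_def)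
    then show "F (0 + (1 / c) * s) = indicator {0..1} s * G (p i + s *\<^sub>R v)"
      using affine_line_mem_convex_hull_2_iff[OF pij, of s] by (simp add: indicator_def v_def)
  qed
  also have "\<bar>1 / c\<bar> = norm v"
    using c c0 by (simp add: field_simps abs_divide)
  finally show ?thesis
    by (simp add: v_def)
qed

lemma distr_PiM_two_lborel:
  "distr (lborel \<Otimes>\<^sub>M lborel) (PiM {0, 1::nat} (\<lambda>_. lborel::real measure))
      (\<lambda>z. \<lambda>i\<in>{0, 1::nat}. if i = 0 then fst z else snd z) = PiM {0, 1} (\<lambda>_. lborel)"
    (is "distr _ _ ?g = _")
proof -
  interpret product_sigma_finite "\<lambda>_::nat. lborel::real measure" by standard
  have g: "?g \<in> measurable (lborel \<Otimes>\<^sub>M lborel) (PiM {0, 1::nat} (\<lambda>_. lborel::real measure))"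
    by (rule measurable_restrict) auto
  show ?thesis
  proof (rule PiM_eqI)
    fix A assume A: "\<And>i. i \<in> {0, 1::nat} \<Longrightarrow> A i \<in> sets (lborel::real measure)"
    have "?g -` Pi\<^sub>E {0, 1} A \<inter> space (lborel \<Otimes>\<^sub>M lborel) = A 0 \<times> A 1"
      by (auto simp: space_pair_measure PiE_def Pi_def)
    moreover have "emeasure (distr (lborel \<Otimes>\<^sub>M lborel) (PiM {0, 1::nat} (\<lambda>_. lborel)) ?g)
        (Pi\<^sub>E {0, 1} A) = emeasure (lborel \<Otimes>\<^sub>M lborel) (?g -` Pi\<^sub>E {0, 1} A \<inter> space (lborel \<Otimes>\<^sub>M lborel))"
      by (rule emeasure_distr[OF g]) (use A in \<open>auto intro!: sets_PiM_I_finite\<close>)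
    moreover have "emeasure (lborel \<Otimes>\<^sub>M lborel) (A 0 \<times> A 1) = emeasure lborel (A 0) * emeasure lborel (A 1)"
      by (rule lborel.emeasure_pair_measure_Times) (use A in auto)
    ultimately show "emeasure (distr (lborel \<Otimes>\<^sub>M lborel) (PiM {0, 1::nat} (\<lambda>_. lborel)) ?g)
        (Pi\<^sub>E {0, 1} A) = (\<Prod>i\<in>{0, 1}. emeasure lborel (A i))"
      by simp
  qed auto
qed

lemma integral_PiM_two_lborel:
  fixes f :: "real \<Rightarrow> real \<Rightarrow> real"
  assumes f: "(\<lambda>z. f (fst z) (snd z)) \<in> borel_measurable borel"
  shows "(\<integral>t. f (t 0) (t 1) \<partial>PiM {..<2::nat} (\<lambda>_. lborel)) = (\<integral>z. f (fst z) (snd z) \<partial>lborel)"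
proof -
  have two: "{..<2::nat} = {0, 1}"
    by auto
  have g: "(\<lambda>z. \<lambda>i\<in>{0, 1::nat}. if i = 0 then fst z else snd z)
      \<in> measurable (lborel \<Otimes>\<^sub>M lborel) (PiM {0, 1::nat} (\<lambda>_. lborel::real measure))"
    by (rule measurable_restrict) auto
  have "(\<lambda>t. (t 0, t (1::nat))) \<in> measurable (PiM {0, 1::nat} (\<lambda>_. lborel::real measure)) (lborel \<Otimes>\<^sub>M lborel)"
    by (intro measurable_Pair measurable_component_singleton) auto
  then have "(\<lambda>t. (t 0, t (1::nat))) \<in> measurable (PiM {0, 1::nat} (\<lambda>_. lborel::real measure)) borel"
    by (simp add: lborel_prod measurable_lborel2)
  from measurable_comp[OF this f]
  have ft: "(\<lambda>t. f (t 0) (t 1)) \<in> borel_measurable (PiM {0, 1::nat} (\<lambda>_. lborel::real measure))"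
    by (simp add: o_def)
  have "(\<integral>t. f (t 0) (t 1) \<partial>PiM {..<2::nat} (\<lambda>_. lborel)) =
      (\<integral>t. f (t 0) (t 1) \<partial>distr (lborel \<Otimes>\<^sub>M lborel) (PiM {0, 1::nat} (\<lambda>_. lborel::real measure))
        (\<lambda>z. \<lambda>i\<in>{0, 1::nat}. if i = 0 then fst z else snd z))"
    by (simp only: two distr_PiM_two_lborel)
  also have "\<dots> = (\<integral>z. f (fst z) (snd z) \<partial>(lborel \<Otimes>\<^sub>M lborel))"
    by (subst integral_distr[OF g ft]) simp
  finally show ?thesis
    by (simp add: lborel_prod)
qed

lemma integral_shear_snd:
  fixes k :: "real \<times> real \<Rightarrow> real"
  assumes k: "integrable lborel k"
    and k': "integrable lborel (\<lambda>z. k (fst z, a * fst z + b * snd z))" and b: "b \<noteq> 0"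
  shows "(\<integral>z. k z \<partial>lborel) = \<bar>b\<bar> * (\<integral>z. k (fst z, a * fst z + b * snd z) \<partial>lborel)"
proof -
  have "(\<integral>z. k z \<partial>lborel) = (\<integral>x. \<integral>y. k (x, y) \<partial>lborel \<partial>lborel)"
    using lborel_pair.integral_fst'[of k] k by (simp add: lborel_prod)
  also have "\<dots> = (\<integral>x. \<bar>b\<bar> * (\<integral>y. k (x, a * x + b * y) \<partial>lborel) \<partial>lborel)"
    using lborel_integral_real_affine[OF b, where f = "\<lambda>y. k (_, y)"] by simp
  also have "\<dots> = \<bar>b\<bar> * (\<integral>z. k (fst z, a * fst z + b * snd z) \<partial>lborel)"
    using lborel_pair.integral_fst'[of "\<lambda>z. k (fst z, a * fst z + b * snd z)"] k'
    by (simp add: lborel_prod)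
  finally show ?thesis .
qed

lemma integral_shear_fst:
  fixes k :: "real \<times> real \<Rightarrow> real"
  assumes k: "integrable lborel k"
    and k': "integrable lborel (\<lambda>z. k (a * fst z + b * snd z, snd z))" and a: "a \<noteq> 0"
  shows "(\<integral>z. k z \<partial>lborel) = \<bar>a\<bar> * (\<integral>z. k (a * fst z + b * snd z, snd z) \<partial>lborel)"
proof -
  have "(\<integral>z. k z \<partial>lborel) = (\<integral>y. \<integral>x. k (x, y) \<partial>lborel \<partial>lborel)"
    using lborel_pair.integral_snd[of "\<lambda>x y. k (x, y)"] k by (simp add: lborel_prod case_prod_beta')
  also have "\<dots> = (\<integral>y. \<bar>a\<bar> * (\<integral>x. k (a * x + b * y, y) \<partial>lborel) \<partial>lborel)"
  proof -
    have "(\<integral>x. k (x, y) \<partial>lborel) = \<bar>a\<bar> * (\<integral>x. k (a * x + b * y, y) \<partial>lborel)" for y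
      using lborel_integral_real_affine[OF a, where f = "\<lambda>x. k (x, y)" and t = "b * y"]
      by (simp add: add.commute)
    then show ?thesis by simp
  qed
  also have "\<dots> = \<bar>a\<bar> * (\<integral>z. k (a * fst z + b * snd z, snd z) \<partial>lborel)"
    using lborel_pair.integral_snd[of "\<lambda>x y. k (a * x + b * y, y)"] k'
    by (simp add: lborel_prod case_prod_beta')
  finally show ?thesis .
qed

lemma integral_linear_image_plane_shears:
  fixes h :: "real \<times> real \<Rightarrow> real" and T :: "(real \<times> real) set"
  assumes T: "compact T" and h: "continuous_on UNIV h"
    and u0: "u0 \<noteq> 0" and det: "u0 * w1 - u1 * w0 \<noteq> 0"
  shows "(\<integral>z. indicator ((\<lambda>z. (u0 * fst z + w0 * snd z, u1 * fst z + w1 * snd z)) ` T) z * h z \<partial>lborel)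
    = \<bar>u0 * w1 - u1 * w0\<bar> *
      (\<integral>z. indicator T z * h (u0 * fst z + w0 * snd z, u1 * fst z + w1 * snd z) \<partial>lborel)"
proof -
  define D where "D = u0 * w1 - u1 * w0"
  define M where "M = (\<lambda>z::real \<times> real. (u0 * fst z + w0 * snd z, u1 * fst z + w1 * snd z))"
  define L where "L = (\<lambda>z::real \<times> real. (fst z, (u1 / u0) * fst z + (D / u0) * snd z))"
  define N where "N = (\<lambda>z::real \<times> real. (u0 * fst z + w0 * snd z, snd z))"
  have D: "D \<noteq> 0"
    using det by (simp add: D_def)
  have M_eq: "M = L \<circ> N"
    using u0 by (auto simp: L_def N_def M_def D_def field_simps)
  have MLN: "M ` T = L ` N ` T"
    by (simp add: M_eq image_comp)
  have "inj L"
  proof (rule injI)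
    fix z z' assume "L z = L z'"
    then have "fst z = fst z'" "(D / u0) * snd z = (D / u0) * snd z'"
      by (auto simp: L_def)
    with D u0 show "z = z'"
      by (simp add: prod_eq_iff)
  qed
  have "inj N"
  proof (rule injI)
    fix z z' assume "N z = N z'"
    then have "snd z = snd z'" "u0 * fst z + w0 * snd z = u0 * fst z' + w0 * snd z'"
      by (auto simp: N_def)
    with u0 show "z = z'"
      by (simp add: prod_eq_iff)
  qed
  have cont: "continuous_on UNIV L" "continuous_on UNIV N" "continuous_on UNIV M"
    using u0 unfolding L_def N_def M_def by (auto intro!: continuous_intros)
  have NT: "compact (N ` T)" and MT: "compact (M ` T)"
    using T cont by (auto intro: compact_continuous_image continuous_on_subset)
  have iM: "integrable lborel (\<lambda>z. indicator (M ` T) z * h z)"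
    by (rule integrable_indicator_times_continuous[OF MT h])
  have iN: "integrable lborel (\<lambda>z. indicator (N ` T) z * h (L z))"
    by (rule integrable_indicator_times_continuous[OF NT continuous_on_compose2[OF h cont(1)]]) simp
  have iT: "integrable lborel (\<lambda>z. indicator T z * h (M z))"
    by (rule integrable_indicator_times_continuous[OF T continuous_on_compose2[OF h cont(3)]]) simp
  have L_shear: "(\<lambda>z. indicator (M ` T) (L z) * h (L z)) = (\<lambda>z. indicator (N ` T) z * h (L z))"
    using \<open>inj L\<close> by (simp add: MLN inj_image_mem_iff indicator_def)
  have N_shear: "(\<lambda>z. indicator (N ` T) (N z) * h (L (N z))) = (\<lambda>z. indicator T z * h (M z))"
    using \<open>inj N\<close> by (simp add: M_eq inj_image_mem_iff indicator_def)
  have "(\<integral>z. indicator (M ` T) z * h z \<partial>lborel) =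
      \<bar>D / u0\<bar> * (\<integral>z. indicator (N ` T) z * h (L z) \<partial>lborel)"
    using integral_shear_snd[OF iM, of "u1 / u0" "D / u0"] L_shear iN D u0 by (simp add: L_def)
  also have "(\<integral>z. indicator (N ` T) z * h (L z) \<partial>lborel) =
      \<bar>u0\<bar> * (\<integral>z. indicator T z * h (M z) \<partial>lborel)"
    using integral_shear_fst[OF iN, of u0 w0] N_shear iT u0 by (simp add: N_def)
  finally show ?thesis
    using u0 by (simp add: M_def D_def abs_divide)
qed

lemma integral_linear_image_plane:
  fixes h :: "real \<times> real \<Rightarrow> real" and T :: "(real \<times> real) set"
  assumes T: "compact T" and h: "continuous_on UNIV h" and det: "u0 * w1 - u1 * w0 \<noteq> 0"
  shows "(\<integral>z. indicator ((\<lambda>z. (u0 * fst z + w0 * snd z, u1 * fst z + w1 * snd z)) ` T) z * h z \<partial>lborel)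
    = \<bar>u0 * w1 - u1 * w0\<bar> *
      (\<integral>z. indicator T z * h (u0 * fst z + w0 * snd z, u1 * fst z + w1 * snd z) \<partial>lborel)"
proof (cases "u0 = 0")
  case False
  show ?thesis
    by (rule integral_linear_image_plane_shears[OF T h False det])
next
  case True
  \<comment> \<open>Swapping the coordinates of the domain exchanges the two columns, and then
      the first column has a nonzero first entry.\<close>
  then have w0: "w0 \<noteq> 0"
    using det by auto
  have T': "compact (prod.swap ` T)"
    by (rule compact_continuous_image[OF _ T]) (intro continuous_intros)
  have det': "w0 * u1 - w1 * u0 \<noteq> 0"
    using det by (simp add: algebra_simps)
  have img: "(\<lambda>z. (w0 * fst z + u0 * snd z, w1 * fst z + u1 * snd z)) ` prod.swap ` T
      = (\<lambda>z. (u0 * fst z + w0 * snd z, u1 * fst z + w1 * snd z)) ` T"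
    by (auto simp: image_image algebra_simps)
  define G where "G = (\<lambda>z. indicator T z * h (u0 * fst z + w0 * snd z, u1 * fst z + w1 * snd z))"
  have "integrable lborel G"
    unfolding G_def
    by (rule integrable_indicator_times_continuous[OF T])
       (intro continuous_on_compose2[OF h] continuous_intros; simp)
  then have G: "G \<in> borel_measurable (lborel \<Otimes>\<^sub>M lborel)"
    by (simp add: lborel_prod)
  have ind: "indicator (prod.swap ` T) z = (indicator T (prod.swap z) :: real)" for z
    by (auto simp: indicator_def image_iff) (metis swap_swap)+
  have "(\<integral>z. indicator (prod.swap ` T) z * h (w0 * fst z + u0 * snd z, w1 * fst z + u1 * snd z) \<partial>lborel)
      = (\<integral>(x, y). G (y, x) \<partial>(lborel \<Otimes>\<^sub>M lborel))"
    unfolding ind by (simp add: lborel_prod G_def case_prod_beta' algebra_simps prod.swap_def)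
  also have "\<dots> = (\<integral>z. G z \<partial>lborel)"
    using lborel_pair.integral_product_swap[OF G] by (simp add: lborel_prod)
  finally have "(\<integral>z. indicator (prod.swap ` T) z *
      h (w0 * fst z + u0 * snd z, w1 * fst z + u1 * snd z) \<partial>lborel) = (\<integral>z. G z \<partial>lborel)" .
  moreover have "\<bar>w0 * u1 - w1 * u0\<bar> = \<bar>u0 * w1 - u1 * w0\<bar>"
    by (simp add: abs_minus_commute mult.commute)
  ultimately show ?thesis
    using integral_linear_image_plane_shears[OF T' h w0 det'] img by (simp add: G_def)
qed

definition unit_triangle :: "(real \<times> real) set" where
  "unit_triangle = {z. 0 \<le> fst z \<and> 0 \<le> snd z \<and> fst z + snd z \<le> 1}"

lemma compact_unit_triangle: "compact unit_triangle"
proof -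
  have "closed unit_triangle"
    unfolding unit_triangle_def by (intro closed_Collect_conj closed_Collect_le continuous_intros)
  moreover have "unit_triangle \<subseteq> cball 0 2"
  proof
    fix z assume "z \<in> unit_triangle"
    then have "norm (fst z) \<le> 1" "norm (snd z) \<le> 1"
      by (auto simp: unit_triangle_def)
    then show "z \<in> cball 0 2"
      using norm_Pair_le[of "fst z" "snd z"] by simp
  qed
  ultimately show ?thesis
    using bounded_subset compact_eq_bounded_closed by blast
qed

lemma convex_hull_3_eq_image_unit_triangle:
  "convex hull {a, b, c} = (\<lambda>z. a + fst z *\<^sub>R (b - a) + snd z *\<^sub>R (c - a)) ` unit_triangle"
  unfolding convex_hull_3_alt unit_triangle_def by (auto simp: image_def)

lemma integral_unit_triangle_deriv_fst:
  fixes A A' :: "real \<times> real \<Rightarrow> real"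
  assumes dA: "\<And>s r. ((\<lambda>s. A (s, r)) has_real_derivative A' (s, r)) (at s)"
    and cA: "continuous_on UNIV A" and cA': "continuous_on UNIV A'"
  shows "(\<integral>z. indicator unit_triangle z * A' z \<partial>lborel) =
    (\<integral>r. indicator {0..1} r * A (1 - r, r) \<partial>lborel) - (\<integral>r. indicator {0..1} r * A (0, r) \<partial>lborel)"
proof -
  have fiber: "(\<integral>s. indicator unit_triangle (s, r) * A' (s, r) \<partial>lborel) =
      indicator {0..1} r * A (1 - r, r) - indicator {0..1} r * A (0, r)" for r
  proof (cases "r \<in> {0..1}")
    case True
    have "(\<integral>s. indicator {0..1 - r} s * A' (s, r) \<partial>lborel) = A (1 - r, r) - A (0, r)"
      by (rule integral_indicator_FTC[where F = "\<lambda>s. A (s, r)"])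
         (use True dA in \<open>auto intro!: continuous_on_compose2[OF cA'] continuous_intros\<close>)
    moreover have "indicator unit_triangle (s, r) = (indicator {0..1 - r} s :: real)" for s
      using True by (auto simp: unit_triangle_def indicator_def)
    ultimately show ?thesis
      using True by simp
  next
    case False
    then have "indicator unit_triangle (s, r) = (0 :: real)" for s
      by (auto simp: unit_triangle_def indicator_def)
    with False show ?thesis by simp
  qed
  have "integrable lborel (\<lambda>z. indicator unit_triangle z * A' z)"
    by (rule integrable_indicator_times_continuous[OF compact_unit_triangle cA'])
  then have "(\<integral>z. indicator unit_triangle z * A' z \<partial>lborel) =
      (\<integral>r. \<integral>s. indicator unit_triangle (s, r) * A' (s, r) \<partial>lborel \<partial>lborel)"
    using lborel_pair.integral_snd[of "\<lambda>s r. indicator unit_triangle (s, r) * A' (s, r)"]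
    by (simp add: lborel_prod case_prod_beta')
  also have "\<dots> = (\<integral>r. indicator {0..1} r * A (1 - r, r) - indicator {0..1} r * A (0, r) \<partial>lborel)"
    by (simp only: fiber)
  also have "\<dots> = (\<integral>r. indicator {0..1} r * A (1 - r, r) \<partial>lborel) - (\<integral>r. indicator {0..1} r * A (0, r) \<partial>lborel)"
    by (intro Bochner_Integration.integral_diff integrable_indicator_times_continuous compact_Icc
        continuous_on_compose2[OF cA] continuous_intros) auto
  finally show ?thesis .
qed

lemma integral_unit_triangle_deriv_snd:
  fixes C C' :: "real \<times> real \<Rightarrow> real"
  assumes dC: "\<And>s r. ((\<lambda>r. C (s, r)) has_real_derivative C' (s, r)) (at r)"
    and cC: "continuous_on UNIV C" and cC': "continuous_on UNIV C'"
  shows "(\<integral>z. indicator unit_triangle z * C' z \<partial>lborel) =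
    (\<integral>s. indicator {0..1} s * C (s, 1 - s) \<partial>lborel) - (\<integral>s. indicator {0..1} s * C (s, 0) \<partial>lborel)"
proof -
  have fiber: "(\<integral>r. indicator unit_triangle (s, r) * C' (s, r) \<partial>lborel) =
      indicator {0..1} s * C (s, 1 - s) - indicator {0..1} s * C (s, 0)" for s
  proof (cases "s \<in> {0..1}")
    case True
    have "(\<integral>r. indicator {0..1 - s} r * C' (s, r) \<partial>lborel) = C (s, 1 - s) - C (s, 0)"
      by (rule integral_indicator_FTC[where F = "\<lambda>r. C (s, r)"])
         (use True dC in \<open>auto intro!: continuous_on_compose2[OF cC'] continuous_intros\<close>)
    moreover have "indicator unit_triangle (s, r) = (indicator {0..1 - s} r :: real)" for r
      using True by (auto simp: unit_triangle_def indicator_def)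
    ultimately show ?thesis
      using True by simp
  next
    case False
    then have "indicator unit_triangle (s, r) = (0 :: real)" for r
      by (auto simp: unit_triangle_def indicator_def)
    with False show ?thesis by simp
  qed
  have "integrable lborel (\<lambda>z. indicator unit_triangle z * C' z)"
    by (rule integrable_indicator_times_continuous[OF compact_unit_triangle cC'])
  then have "(\<integral>z. indicator unit_triangle z * C' z \<partial>lborel) =
      (\<integral>s. \<integral>r. indicator unit_triangle (s, r) * C' (s, r) \<partial>lborel \<partial>lborel)"
    using lborel_pair.integral_fst'[of "\<lambda>z. indicator unit_triangle z * C' z"] by (simp add: lborel_prod)
  also have "\<dots> = (\<integral>s. indicator {0..1} s * C (s, 1 - s) - indicator {0..1} s * C (s, 0) \<partial>lborel)"
    by (simp only: fiber)
  also have "\<dots> = (\<integral>s. indicator {0..1} s * C (s, 1 - s) \<partial>lborel) - (\<integral>s. indicator {0..1} s * C (s, 0) \<partial>lborel)"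
    by (intro Bochner_Integration.integral_diff integrable_indicator_times_continuous compact_Icc
        continuous_on_compose2[OF cC] continuous_intros) auto
  finally show ?thesis .
qed

lemma green_unit_triangle:
  fixes A A' C C' :: "real \<times> real \<Rightarrow> real"
  assumes dA: "\<And>s r. ((\<lambda>s. A (s, r)) has_real_derivative A' (s, r)) (at s)"
    and dC: "\<And>s r. ((\<lambda>r. C (s, r)) has_real_derivative C' (s, r)) (at r)"
    and cA: "continuous_on UNIV A" and cC: "continuous_on UNIV C"
    and cA': "continuous_on UNIV A'" and cC': "continuous_on UNIV C'"
  shows "(\<integral>z. indicator unit_triangle z * (A' z - C' z) \<partial>lborel) =
    (\<integral>r. indicator {0..1} r * (A (1 - r, r) - C (1 - r, r)) \<partial>lborel)
    - (\<integral>r. indicator {0..1} r * A (0, r) \<partial>lborel) + (\<integral>s. indicator {0..1} s * C (s, 0) \<partial>lborel)"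
proof -
  have int: "integrable lborel (\<lambda>r. indicator {0..1} r * F (1 - r, r))"
    if "continuous_on UNIV F" for F :: "real \<times> real \<Rightarrow> real"
    by (intro integrable_indicator_times_continuous compact_Icc
        continuous_on_compose2[OF that] continuous_intros) auto
  have "(\<integral>z. indicator unit_triangle z * (A' z - C' z) \<partial>lborel) =
      (\<integral>z. indicator unit_triangle z * A' z \<partial>lborel) - (\<integral>z. indicator unit_triangle z * C' z \<partial>lborel)"
    using integrable_indicator_times_continuous[OF compact_unit_triangle cA']
      integrable_indicator_times_continuous[OF compact_unit_triangle cC']
    by (simp add: right_diff_distrib)
  also have "(\<integral>s. indicator {0..1} s * C (s, 1 - s) \<partial>lborel) = (\<integral>r. indicator {0..1} r * C (1 - r, r) \<partial>lborel)"
    using integral_indicator_01_reflect[of "\<lambda>s. C (s, 1 - s)"] by simp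
  then have "(\<integral>z. indicator unit_triangle z * C' z \<partial>lborel) =
      (\<integral>r. indicator {0..1} r * C (1 - r, r) \<partial>lborel) - (\<integral>s. indicator {0..1} s * C (s, 0) \<partial>lborel)"
    using integral_unit_triangle_deriv_snd[OF dC cC cC'] by simp
  moreover have "(\<integral>r. indicator {0..1} r * (A (1 - r, r) - C (1 - r, r)) \<partial>lborel) =
      (\<integral>r. indicator {0..1} r * A (1 - r, r) \<partial>lborel) - (\<integral>r. indicator {0..1} r * C (1 - r, r) \<partial>lborel)"
    using int[OF cA] int[OF cC] by (simp add: right_diff_distrib)
  ultimately show ?thesis
    using integral_unit_triangle_deriv_fst[OF dA cA cA'] by simp
qed

lemma inj_orthonormal_pair_param:
  fixes q b1 b2 :: "'a::real_inner"
  assumes "b1 \<bullet> b1 = 1" "b2 \<bullet> b2 = 1" "b1 \<bullet> b2 = 0"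
  shows "inj (\<lambda>z::real \<times> real. q + fst z *\<^sub>R b1 + snd z *\<^sub>R b2)"
proof (rule injI)
  fix z z' :: "real \<times> real"
  assume "q + fst z *\<^sub>R b1 + snd z *\<^sub>R b2 = q + fst z' *\<^sub>R b1 + snd z' *\<^sub>R b2"
  then have e: "(fst z - fst z') *\<^sub>R b1 + (snd z - snd z') *\<^sub>R b2 = 0"
    by (simp add: algebra_simps)
  have "b1 \<bullet> ((fst z - fst z') *\<^sub>R b1 + (snd z - snd z') *\<^sub>R b2) = fst z - fst z'"
    "b2 \<bullet> ((fst z - fst z') *\<^sub>R b1 + (snd z - snd z') *\<^sub>R b2) = snd z - snd z'"
    using assms by (simp_all add: inner_add_right inner_commute)
  then show "z = z'"
    unfolding e by (simp add: prod_eq_iff)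
qed

lemma sint_triangle:
  fixes p :: "nat \<Rightarrow> real^'n::finite" and g :: "real^'n \<Rightarrow> real"
  assumes abc: "a < b" "b < c" and g: "continuous_on UNIV g"
    and B: "onb p {a, b, c} = [b1, b2]" and on: "b1 \<bullet> b1 = 1" "b2 \<bullet> b2 = 1" "b1 \<bullet> b2 = 0"
    and u: "p b - p a = u0 *\<^sub>R b1 + u1 *\<^sub>R b2" and w: "p c - p a = w0 *\<^sub>R b1 + w1 *\<^sub>R b2"
    and det: "u0 * w1 - u1 * w0 \<noteq> 0"
  shows "sint p {a, b, c} g = \<bar>u0 * w1 - u1 * w0\<bar> *
    (\<integral>z. indicator unit_triangle z * g (p a + fst z *\<^sub>R (p b - p a) + snd z *\<^sub>R (p c - p a)) \<partial>lborel)"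
proof -
  define P where "P = (\<lambda>z::real \<times> real. p a + fst z *\<^sub>R b1 + snd z *\<^sub>R b2)"
  define M where "M = (\<lambda>z::real \<times> real. (u0 * fst z + w0 * snd z, u1 * fst z + w1 * snd z))"
  define H where "H = convex hull {p a, p b, p c}"
  have PM: "P (M z) = p a + fst z *\<^sub>R (p b - p a) + snd z *\<^sub>R (p c - p a)" for z
    by (simp add: P_def M_def u w algebra_simps)
  have "H = P ` M ` unit_triangle"
    unfolding H_def convex_hull_3_eq_image_unit_triangle image_image PM ..
  then have H: "indicator H (P z) = (indicator (M ` unit_triangle) z :: real)" for z
    using inj_orthonormal_pair_param[OF on, of "p a", folded P_def]
    by (simp add: indicator_def inj_image_mem_iff)
  have cP: "continuous_on UNIV P"
    unfolding P_def by (intro continuous_intros)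
  have "closed H"
    unfolding H_def by (simp add: compact_imp_closed compact_convex_hull)
  have "card {a, b, c} = 3" "Min {a, b, c} = a"
    using abc by auto
  moreover have "p a + (\<Sum>i<2. t i *\<^sub>R [b1, b2] ! i) = P (t 0, t 1)" for t :: "nat \<Rightarrow> real"
    by (simp add: P_def numeral_2_eq_2 lessThan_Suc algebra_simps)
  ultimately have "sint p {a, b, c} g =
      (\<integral>t. indicator H (P (t 0, t 1)) * g (P (t 0, t 1)) \<partial>PiM {..<2::nat} (\<lambda>_. lborel))"
    by (simp add: sint_def Let_def B H_def simp_set_def insert_commute)
  also have "\<dots> = (\<integral>z. indicator H (P (fst z, snd z)) * g (P (fst z, snd z)) \<partial>lborel)"
    by (rule integral_PiM_two_lborel[where f = "\<lambda>x y. indicator H (P (x, y)) * g (P (x, y))"])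
       (use borel_measurable_indicator_comp_continuous[OF \<open>closed H\<close> cP g] in simp)
  also have "\<dots> = (\<integral>z. indicator (M ` unit_triangle) z * (g \<circ> P) z \<partial>lborel)"
    by (simp add: H)
  also have "\<dots> = \<bar>u0 * w1 - u1 * w0\<bar> * (\<integral>z. indicator unit_triangle z * (g \<circ> P) (M z) \<partial>lborel)"
    unfolding M_def
    by (rule integral_linear_image_plane[OF compact_unit_triangle continuous_on_compose[OF cP] det])
       (rule continuous_on_subset[OF g], simp)
  finally show ?thesis
    by (simp add: PM)
qed

section \<open>Polynomial forms and their exterior derivatives\<close>

lemma real_polynomial_function_has_derivative:
  fixes f :: "'a::real_normed_vector \<Rightarrow> real"
  assumes "real_polynomial_function f"
  obtains D where "\<And>x. (f has_derivative D x) (at x)" "\<And>u. real_polynomial_function (\<lambda>x. D x u)"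
proof -
  from assms have "\<exists>D. (\<forall>x. (f has_derivative D x) (at x)) \<and> (\<forall>u. real_polynomial_function (\<lambda>x. D x u))"
  proof (induction f rule: real_polynomial_function.induct)
    case (linear f)
    then show ?case
      by (intro exI[of _ "\<lambda>x. f"]) (auto intro: bounded_linear_imp_has_derivative)
  next
    case (const c)
    then show ?case
      by (intro exI[of _ "\<lambda>x u. 0"]) auto
  next
    case (add f g)
    then obtain Df Dg where "\<forall>x. (f has_derivative Df x) (at x)" "\<forall>u. real_polynomial_function (\<lambda>x. Df x u)"
      "\<forall>x. (g has_derivative Dg x) (at x)" "\<forall>u. real_polynomial_function (\<lambda>x. Dg x u)"
      by blast
    then show ?case
      by (intro exI[of _ "\<lambda>x u. Df x u + Dg x u"]) (auto intro!: derivative_eq_intros)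
  next
    case (mult f g)
    then obtain Df Dg where "\<forall>x. (f has_derivative Df x) (at x)" "\<forall>u. real_polynomial_function (\<lambda>x. Df x u)"
      "\<forall>x. (g has_derivative Dg x) (at x)" "\<forall>u. real_polynomial_function (\<lambda>x. Dg x u)"
      by blast
    with mult.hyps show ?case
      by (intro exI[of _ "\<lambda>x u. f x * Dg x u + Df x u * g x"])
         (auto intro!: has_derivative_mult real_polynomial_function.intros(3,4))
  qed
  with that show ?thesis
    by blast
qed

lemma continuous_on_real_polynomial_function:
  "real_polynomial_function f \<Longrightarrow> continuous_on S f"
  by (simp add: continuous_on_polymonial_function real_polynomial_function_eq)

lemma has_real_derivative_along_line:
  fixes f :: "'a::real_normed_vector \<Rightarrow> real"
  assumes "\<And>y. (f has_derivative D y) (at y)"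
  shows "((\<lambda>s. f (a + s *\<^sub>R u)) has_real_derivative D (a + s *\<^sub>R u) u) (at s)"
proof -
  have "((\<lambda>s. f (a + s *\<^sub>R u)) has_derivative (\<lambda>h. D (a + s *\<^sub>R u) (h *\<^sub>R u))) (at s)"
    by (rule has_derivative_compose[of "\<lambda>s. a + s *\<^sub>R u", OF _ assms])
       (auto intro!: derivative_eq_intros)
  moreover have "(\<lambda>h. D (a + s *\<^sub>R u) (h *\<^sub>R u)) = (*) (D (a + s *\<^sub>R u) u)"
    using has_derivative_linear[OF assms] by (auto simp: linear_scale mult.commute)
  ultimately show ?thesis
    by (simp add: has_field_derivative_def)
qed

lemma dirderiv_eq_derivative:
  fixes f :: "real^'n::finite \<Rightarrow> real"
  assumes "\<And>y. (f has_derivative D y) (at y)"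
  shows "dirderiv f x u = D x u"
  using has_real_derivative_along_line[OF assms, of x u 0]
  unfolding dirderiv_def by (simp add: DERIV_imp_deriv)

lemma real_polynomial_function_dirderiv:
  fixes f :: "real^'n::finite \<Rightarrow> real"
  assumes "real_polynomial_function f"
  shows "real_polynomial_function (\<lambda>x. dirderiv f x u)"
proof -
  obtain D where D: "\<And>x. (f has_derivative D x) (at x)"
    and D_poly: "\<And>u. real_polynomial_function (\<lambda>x. D x u)"
    using real_polynomial_function_has_derivative[OF assms] by blast
  then show ?thesis
    using dirderiv_eq_derivative[OF D] by simp
qed

lemma extd_0_singleton: "extd 0 \<phi> x [e] = dirderiv (\<lambda>y. \<phi> y []) x e"
  by (simp add: extd_def drop_nth_def)

lemma extd_1_pair:
  "extd 1 \<phi> x [b1, b2] = dirderiv (\<lambda>y. \<phi> y [b2]) x b1 - dirderiv (\<lambda>y. \<phi> y [b1]) x b2"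
  by (simp add: extd_def drop_nth_def numeral_2_eq_2 lessThan_Suc)

lemma poly_form_1_linear:
  assumes "poly_form 1 \<phi>"
  shows "linear (\<lambda>v. \<phi> x [v])"
proof -
  have "alt_form 1 (\<phi> x)"
    using assms by (simp add: poly_form_def)
  then have "\<forall>vs. length vs = 1 \<longrightarrow> (\<forall>i<1. linear (\<lambda>v. \<phi> x (vs[i := v])))"
    unfolding alt_form_def by blast
  then have "linear (\<lambda>v. \<phi> x ([0][0 := v]))"
    by (rule allE[where x = "[0]"]) simp
  then show ?thesis
    by simp
qed

lemma extd_1_change_of_frame:
  fixes \<phi> :: "'n::finite form"
  assumes poly: "\<And>v. real_polynomial_function (\<lambda>x. \<phi> x [v])"
    and lin: "\<And>x. linear (\<lambda>v. \<phi> x [v])"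
    and u: "u = u0 *\<^sub>R b1 + u1 *\<^sub>R b2" and w: "w = w0 *\<^sub>R b1 + w1 *\<^sub>R b2"
  shows "extd 1 \<phi> x [u, w] = (u0 * w1 - u1 * w0) * extd 1 \<phi> x [b1, b2]"
proof -
  obtain D1 where D1: "\<And>y. ((\<lambda>y. \<phi> y [b1]) has_derivative D1 y) (at y)"
    using real_polynomial_function_has_derivative[OF poly] by blast
  obtain D2 where D2: "\<And>y. ((\<lambda>y. \<phi> y [b2]) has_derivative D2 y) (at y)"
    using real_polynomial_function_has_derivative[OF poly] by blast
  have D: "linear (D1 x)" "linear (D2 x)"
    using D1 D2 has_derivative_linear by blast+
  have dd: "dirderiv (\<lambda>y. \<phi> y [\<alpha> *\<^sub>R b1 + \<beta> *\<^sub>R b2]) x v = \<alpha> * D1 x v + \<beta> * D2 x v" for \<alpha> \<beta> v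
  proof -
    have "(\<lambda>y. \<phi> y [\<alpha> *\<^sub>R b1 + \<beta> *\<^sub>R b2]) = (\<lambda>y. \<alpha> * \<phi> y [b1] + \<beta> * \<phi> y [b2])"
      using linear_add[OF lin] linear_scale[OF lin] by simp
    moreover have "dirderiv (\<lambda>y. \<alpha> * \<phi> y [b1] + \<beta> * \<phi> y [b2]) x v = \<alpha> * D1 x v + \<beta> * D2 x v"
      by (rule dirderiv_eq_derivative[where D = "\<lambda>y v. \<alpha> * D1 y v + \<beta> * D2 y v"])
         (intro derivative_intros D1 D2)
    ultimately show ?thesis
      by simp
  qed
  have "extd 1 \<phi> x [u, w] = (w0 * D1 x u + w1 * D2 x u) - (u0 * D1 x w + u1 * D2 x w)"
    unfolding extd_1_pair by (simp add: u w dd)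
  also have "\<dots> = (u0 * w1 - u1 * w0) * (D2 x b1 - D1 x b2)"
    by (simp add: u w linear_add[OF D(1)] linear_add[OF D(2)] linear_scale[OF D(1)]
        linear_scale[OF D(2)] algebra_simps)
  also have "D2 x b1 - D1 x b2 = extd 1 \<phi> x [b1, b2]"
    using dd[of 1 0] dd[of 0 1] unfolding extd_1_pair by simp
  finally show ?thesis .
qed

section \<open>Stokes' theorem on edges and triangles\<close>

lemma sint_extd_edge_eq_zero:
  fixes p :: "nat \<Rightarrow> real^'n::finite" and \<phi> :: "'n form"
  assumes ij: "i < j" and pij: "p i \<noteq> p j" and poly: "real_polynomial_function (\<lambda>x. \<phi> x [])"
    and "\<phi> (p i) [] = 0" "\<phi> (p j) [] = 0"
  shows "sint p {i, j} (\<lambda>x. extd 0 \<phi> x (onb p {i, j})) = 0"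
proof -
  define v where "v = p j - p i"
  obtain c where e: "onb p {i, j} = [c *\<^sub>R v]"
    using onb_edge[OF _ pij] ij unfolding v_def by blast
  obtain D where D: "\<And>x. ((\<lambda>x. \<phi> x []) has_derivative D x) (at x)"
    and Dp: "\<And>u. real_polynomial_function (\<lambda>x. D x u)"
    using real_polynomial_function_has_derivative[OF poly] by blast
  have "extd 0 \<phi> x (onb p {i, j}) = c * D x v" for x
    using has_derivative_linear[OF D]
    by (simp add: e extd_0_singleton dirderiv_eq_derivative[OF D] linear_scale)
  moreover have "continuous_on UNIV (\<lambda>x. c * D x v)"
    by (intro continuous_intros continuous_on_real_polynomial_function Dp)
  ultimately have "sint p {i, j} (\<lambda>x. extd 0 \<phi> x (onb p {i, j})) =
      norm v * (\<integral>s. indicator {0..1} s * (c * D (p i + s *\<^sub>R v) v) \<partial>lborel)"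
    using sint_edge[OF ij pij, of "\<lambda>x. c * D x v"] by (simp add: v_def)
  also have "\<dots> = norm v * c * (\<integral>s. indicator {0..1} s * D (p i + s *\<^sub>R v) v \<partial>lborel)"
    by (simp add: algebra_simps)
  also have "(\<integral>s. indicator {0..1} s * D (p i + s *\<^sub>R v) v \<partial>lborel) = \<phi> (p i + 1 *\<^sub>R v) [] - \<phi> (p i + 0 *\<^sub>R v) []"
    by (rule integral_indicator_FTC[OF _ has_real_derivative_along_line[OF D]])
       (auto intro!: continuous_on_compose2[OF continuous_on_real_polynomial_function[OF Dp]] continuous_intros)
  finally show ?thesis
    using assms(4,5) by (simp add: v_def)
qed

lemma line_integral_edge_eq_zero:
  fixes p :: "nat \<Rightarrow> real^'n::finite" and \<phi> :: "'n form"
  assumes ij: "i < j" and pij: "p i \<noteq> p j"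
    and poly: "\<And>v. real_polynomial_function (\<lambda>x. \<phi> x [v])"
    and lin: "\<And>x. linear (\<lambda>v. \<phi> x [v])"
    and zero: "sint p {i, j} (\<lambda>x. \<phi> x (onb p {i, j})) = 0"
  shows "(\<integral>s. indicator {0..1} s * \<phi> (p i + s *\<^sub>R (p j - p i)) [p j - p i] \<partial>lborel) = 0"
proof -
  define v where "v = p j - p i"
  obtain c where e: "onb p {i, j} = [c *\<^sub>R v]" and c: "\<bar>c\<bar> * norm v = 1"
    using onb_edge[OF _ pij] ij unfolding v_def by blast
  have "\<phi> x (onb p {i, j}) = c * \<phi> x [v]" for x
    using linear_scale[OF lin] by (simp add: e)
  moreover have "continuous_on UNIV (\<lambda>x. c * \<phi> x [v])"
    by (intro continuous_intros continuous_on_real_polynomial_function poly)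
  ultimately have "0 = norm v * (\<integral>s. indicator {0..1} s * (c * \<phi> (p i + s *\<^sub>R v) [v]) \<partial>lborel)"
    using zero sint_edge[OF ij pij, of "\<lambda>x. c * \<phi> x [v]"] by (simp add: v_def)
  also have "\<dots> = (norm v * c) * (\<integral>s. indicator {0..1} s * \<phi> (p i + s *\<^sub>R v) [v] \<partial>lborel)"
    by (simp add: algebra_simps)
  finally have "(norm v * c) * (\<integral>s. indicator {0..1} s * \<phi> (p i + s *\<^sub>R v) [v] \<partial>lborel) = 0" ..
  moreover have "norm v * c \<noteq> 0"
    using c by auto
  ultimately show ?thesis
    by (simp add: v_def)
qed

lemma stokes_unit_triangle:
  fixes \<phi> :: "'n::finite form" and q u w :: "real^'n"
  assumes poly: "\<And>v. real_polynomial_function (\<lambda>x. \<phi> x [v])"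
    and lin: "\<And>x. linear (\<lambda>v. \<phi> x [v])"
  shows "(\<integral>z. indicator unit_triangle z * extd 1 \<phi> (q + fst z *\<^sub>R u + snd z *\<^sub>R w) [u, w] \<partial>lborel) =
      (\<integral>r. indicator {0..1} r * \<phi> (q + u + r *\<^sub>R (w - u)) [w - u] \<partial>lborel)
      - (\<integral>r. indicator {0..1} r * \<phi> (q + r *\<^sub>R w) [w] \<partial>lborel)
      + (\<integral>s. indicator {0..1} s * \<phi> (q + s *\<^sub>R u) [u] \<partial>lborel)"
proof -
  obtain Du where Du: "\<And>y. ((\<lambda>y. \<phi> y [u]) has_derivative Du y) (at y)"
    and Du_poly: "\<And>v. real_polynomial_function (\<lambda>y. Du y v)"
    using real_polynomial_function_has_derivative[OF poly] by blast
  obtain Dw where Dw: "\<And>y. ((\<lambda>y. \<phi> y [w]) has_derivative Dw y) (at y)"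
    and Dw_poly: "\<And>v. real_polynomial_function (\<lambda>y. Dw y v)"
    using real_polynomial_function_has_derivative[OF poly] by blast
  define F where "F = (\<lambda>z::real \<times> real. q + fst z *\<^sub>R u + snd z *\<^sub>R w)"
  have cont: "continuous_on UNIV (\<lambda>z. g (F z))" if "real_polynomial_function g" for g
    unfolding F_def
    by (rule continuous_on_compose2[OF continuous_on_real_polynomial_function[OF that]])
       (auto intro!: continuous_intros)
  define A where "A = (\<lambda>z. \<phi> (F z) [w])"
  define A' where "A' = (\<lambda>z. Dw (F z) u)"
  define C where "C = (\<lambda>z. \<phi> (F z) [u])"
  define C' where "C' = (\<lambda>z. Du (F z) w)"
  have "((\<lambda>s. A (s, r)) has_real_derivative A' (s, r)) (at s)" for s r
  proof -
    have "F (s', r) = (q + r *\<^sub>R w) + s' *\<^sub>R u" for s'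
      by (simp add: F_def algebra_simps)
    then show ?thesis
      unfolding A_def A'_def using has_real_derivative_along_line[OF Dw] by simp
  qed
  moreover have "((\<lambda>r. C (s, r)) has_real_derivative C' (s, r)) (at r)" for s r
  proof -
    have "F (s, r') = (q + s *\<^sub>R u) + r' *\<^sub>R w" for r'
      by (simp add: F_def algebra_simps)
    then show ?thesis
      unfolding C_def C'_def using has_real_derivative_along_line[OF Du] by simp
  qed
  moreover have "continuous_on UNIV A" "continuous_on UNIV C" "continuous_on UNIV A'" "continuous_on UNIV C'"
    unfolding A_def C_def A'_def C'_def by (intro cont poly Du_poly Dw_poly)+
  ultimately have green: "(\<integral>z. indicator unit_triangle z * (A' z - C' z) \<partial>lborel) =
      (\<integral>r. indicator {0..1} r * (A (1 - r, r) - C (1 - r, r)) \<partial>lborel)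
      - (\<integral>r. indicator {0..1} r * A (0, r) \<partial>lborel) + (\<integral>s. indicator {0..1} s * C (s, 0) \<partial>lborel)"
    by (rule green_unit_triangle)
  have "extd 1 \<phi> (F z) [u, w] = A' z - C' z" for z
    unfolding extd_1_pair by (simp add: A'_def C'_def dirderiv_eq_derivative[OF Dw] dirderiv_eq_derivative[OF Du])
  moreover have "A (1 - r, r) - C (1 - r, r) = \<phi> (q + u + r *\<^sub>R (w - u)) [w - u]" for r
  proof -
    have "F (1 - r, r) = q + u + r *\<^sub>R (w - u)"
      by (simp add: F_def algebra_simps)
    then show ?thesis
      using linear_diff[OF lin] by (simp add: A_def C_def)
  qed
  moreover have "A (0, r) = \<phi> (q + r *\<^sub>R w) [w]" "C (s, 0) = \<phi> (q + s *\<^sub>R u) [u]" for r s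
    by (simp_all add: A_def C_def F_def)
  ultimately show ?thesis
    using green by (simp add: F_def)
qed

lemma sint_extd_triangle_eq_zero:
  fixes p :: "nat \<Rightarrow> real^'n::finite" and \<phi> :: "'n form"
  assumes abc: "a < b" "b < c"
    and ind: "\<And>\<alpha> \<beta>. \<alpha> *\<^sub>R (p b - p a) + \<beta> *\<^sub>R (p c - p a) = 0 \<Longrightarrow> \<alpha> = 0 \<and> \<beta> = 0"
    and poly: "\<And>v. real_polynomial_function (\<lambda>x. \<phi> x [v])"
    and lin: "\<And>x. linear (\<lambda>v. \<phi> x [v])"
    and ab: "sint p {a, b} (\<lambda>x. \<phi> x (onb p {a, b})) = 0"
    and ac: "sint p {a, c} (\<lambda>x. \<phi> x (onb p {a, c})) = 0"
    and bc: "sint p {b, c} (\<lambda>x. \<phi> x (onb p {b, c})) = 0"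
  shows "sint p {a, b, c} (\<lambda>x. extd 1 \<phi> x (onb p {a, b, c})) = 0"
proof -
  define u where "u = p b - p a"
  define w where "w = p c - p a"
  have pab: "p a \<noteq> p b"
    using ind[of 1 0] by auto
  have pac: "p a \<noteq> p c"
    using ind[of 0 1] by auto
  have pbc: "p b \<noteq> p c"
  proof
    assume "p b = p c"
    then show False
      using ind[of 1 "-1"] by simp
  qed
  have "a \<noteq> b" "a \<noteq> c" "b \<noteq> c"
    using abc by auto
  then obtain b1 b2 where B: "onb p {a, b, c} = [b1, b2]"
    and on: "b1 \<bullet> b1 = 1" "b2 \<bullet> b2 = 1" "b1 \<bullet> b2 = 0"
    and span: "u \<in> span {b1, b2}" "w \<in> span {b1, b2}"
    using onb_triangle[OF _ _ _ ind] unfolding u_def w_def by blast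
  define u0 u1 w0 w1 where "u0 = u \<bullet> b1" and "u1 = u \<bullet> b2" and "w0 = w \<bullet> b1" and "w1 = w \<bullet> b2"
  have uB: "u = u0 *\<^sub>R b1 + u1 *\<^sub>R b2" and wB: "w = w0 *\<^sub>R b1 + w1 *\<^sub>R b2"
    using orthonormal_pair_expansion[OF on span(1)] orthonormal_pair_expansion[OF on span(2)]
    by (simp_all add: u0_def u1_def w0_def w1_def)
  have det: "u0 * w1 - u1 * w0 \<noteq> 0"
    by (rule independent_pair_coords_det_nonzero[OF ind[folded u_def w_def] uB wB])
  define g where "g = (\<lambda>x. extd 1 \<phi> x [b1, b2])"
  have "real_polynomial_function g"
    unfolding g_def extd_1_pair by (intro real_polynomial_function_diff real_polynomial_function_dirderiv poly)
  then have "sint p {a, b, c} (\<lambda>x. extd 1 \<phi> x (onb p {a, b, c})) = \<bar>u0 * w1 - u1 * w0\<bar> *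
      (\<integral>z. indicator unit_triangle z * g (p a + fst z *\<^sub>R u + snd z *\<^sub>R w) \<partial>lborel)"
    using sint_triangle[OF abc continuous_on_real_polynomial_function B on uB[unfolded u_def]
        wB[unfolded w_def] det]
    by (simp add: B g_def u_def w_def)
  also have "(\<integral>z. indicator unit_triangle z * g (p a + fst z *\<^sub>R u + snd z *\<^sub>R w) \<partial>lborel) = 0"
  proof -
    have "(u0 * w1 - u1 * w0) * (\<integral>z. indicator unit_triangle z * g (p a + fst z *\<^sub>R u + snd z *\<^sub>R w) \<partial>lborel)
        = (\<integral>z. (u0 * w1 - u1 * w0) * (indicator unit_triangle z * g (p a + fst z *\<^sub>R u + snd z *\<^sub>R w)) \<partial>lborel)"
      by simp
    also have "\<dots> = (\<integral>z. indicator unit_triangle z * extd 1 \<phi> (p a + fst z *\<^sub>R u + snd z *\<^sub>R w) [u, w] \<partial>lborel)"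
      using extd_1_change_of_frame[OF poly lin uB wB] by (simp add: g_def mult.left_commute)
    also have "\<dots> = 0"
    proof -
      have "p a + u = p b" "w - u = p c - p b"
        by (simp_all add: u_def w_def)
      then show ?thesis
        using stokes_unit_triangle[OF poly lin, of "p a" u w]
          line_integral_edge_eq_zero[OF abc(1) pab poly lin ab]
          line_integral_edge_eq_zero[OF order.strict_trans[OF abc] pac poly lin ac]
          line_integral_edge_eq_zero[OF abc(2) pbc poly lin bc]
        by (simp add: u_def w_def)
    qed
    finally show ?thesis
      using det by simp
  qed
  finally show ?thesis
    by simp
qed

lemma sint_extd_eq_zero:
  fixes p :: "nat \<Rightarrow> real^'n::finite" and \<phi> :: "'n form"
  assumes k: "k = 1 \<or> k = 2" and \<phi>: "poly_form (k - 1) \<phi>"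
    and V: "card V = Suc k" and inj: "inj_on p V" and aff: "\<not> affine_dependent (p ` V)"
    and facets: "\<And>F. F \<subseteq> V \<Longrightarrow> card F = k \<Longrightarrow> sint p F (\<lambda>x. \<phi> x (onb p F)) = 0"
  shows "sint p V (\<lambda>x. extd (k - 1) \<phi> x (onb p V)) = 0"
  using k
proof
  assume k1: "k = 1"
  obtain i j where ij: "V = {i, j}" "i < j"
  proof -
    from V k1 have "card V = 2"
      by simp
    then obtain x y where "V = {x, y}" "x \<noteq> y"
      unfolding card_2_iff by blast
    then show ?thesis
      using that[of x y] that[of y x] by (cases "x < y") (auto simp: insert_commute)
  qed
  have "p i \<noteq> p j"
    using inj ij by (auto dest: inj_onD)
  moreover have "real_polynomial_function (\<lambda>x. \<phi> x [])"
    using \<phi> by (simp add: poly_form_def)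
  moreover have "\<phi> (p x) [] = 0" if "x \<in> V" for x
    using facets[of "{x}"] that k1 by (simp add: sint_singleton onb_singleton)
  ultimately have "sint p {i, j} (\<lambda>x. extd 0 \<phi> x (onb p {i, j})) = 0"
    using sint_extd_edge_eq_zero[OF ij(2)] ij(1) by blast
  with k1 ij(1) show ?thesis
    by simp
next
  assume k2: "k = 2"
  obtain a b c where abc: "V = {a, b, c}" "a < b" "b < c"
  proof -
    define xs where "xs = sorted_list_of_set V"
    have "finite V"
      using V card.infinite by force
    then have xs: "sorted_wrt (<) xs" "set xs = V" "length xs = 3"
      using V k2 by (simp_all add: xs_def)
    then obtain a b c where "xs = [a, b, c]"
      by (auto simp: numeral_3_eq_3 length_Suc_conv)
    with xs show ?thesis
      using that[of a b c] by auto
  qed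
  have pd: "p a \<noteq> p b" "p a \<noteq> p c" "p b \<noteq> p c"
    using inj abc by (auto dest: inj_onD)
  have "\<not> affine_dependent {p a, p b, p c}"
    using aff abc by simp
  then have ind: "\<alpha> *\<^sub>R (p b - p a) + \<beta> *\<^sub>R (p c - p a) = 0 \<Longrightarrow> \<alpha> = 0 \<and> \<beta> = 0" for \<alpha> \<beta>
    by (rule affine_independent_triangle_edges[OF _ pd])
  have poly: "real_polynomial_function (\<lambda>x. \<phi> x [v])" for v
    using \<phi> k2 by (simp add: poly_form_def)
  have lin: "linear (\<lambda>v. \<phi> x [v])" for x
    using \<phi> k2 poly_form_1_linear by simp
  have edges: "sint p {x, y} (\<lambda>z. \<phi> z (onb p {x, y})) = 0" if "{x, y} \<subseteq> V" "x < y" for x y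
    using facets that k2 by simp
  have "sint p {a, b, c} (\<lambda>x. extd 1 \<phi> x (onb p {a, b, c})) = 0"
    using sint_extd_triangle_eq_zero[OF abc(2,3) ind poly lin] edges abc by auto
  with k2 abc(1) show ?thesis
    by simp
qed

section \<open>Degrees of freedom and the dual basis\<close>

lemma unisolvent_ex1_dual:
  fixes p :: "nat \<Rightarrow> real^'n::finite"
  assumes "unisolvent p X \<psi> N m"
  shows "\<exists>!v. v \<in> X m \<and>
    (\<forall>i'\<in>dof_idx CARD('n) N m. dof p \<psi> m i' v = (if i' = i then 1 else 0))"
  using spec[OF assms[unfolded unisolvent_def], of "\<lambda>i'. if i' = i then 1 else 0"] by simp

lemma dual_basis_mem:
  fixes p :: "nat \<Rightarrow> real^'n::finite"
  assumes "unisolvent p X \<psi> N m"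
  shows "dual_basis p X \<psi> N m i \<in> X m"
  using theI'[OF unisolvent_ex1_dual[OF assms]] unfolding dual_basis_def by blast

lemma dof_dual_basis:
  fixes p :: "nat \<Rightarrow> real^'n::finite"
  assumes "unisolvent p X \<psi> N m" "i' \<in> dof_idx CARD('n) N m"
  shows "dof p \<psi> m i' (dual_basis p X \<psi> N m i) = (if i' = i then 1 else 0)"
  using theI'[OF unisolvent_ex1_dual[OF assms(1)]] assms(2) unfolding dual_basis_def by blast

lemma dual_basis_eqI:
  fixes p :: "nat \<Rightarrow> real^'n::finite"
  assumes "unisolvent p X \<psi> N m" "v \<in> X m"
    and "\<And>i'. i' \<in> dof_idx CARD('n) N m \<Longrightarrow> dof p \<psi> m i' v = (if i' = i then 1 else 0)"
  shows "dual_basis p X \<psi> N m i = v"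
  unfolding dual_basis_def
  by (rule the1_equality[OF unisolvent_ex1_dual[OF assms(1)]]) (use assms(2,3) in blast)

lemma dof_idx_cases:
  assumes "i \<in> dof_idx d N m"
  obtains (TI_top) V where "i = (TI, V, 1)" "V \<in> Delta d m"
    | (TI_interior) V j l where "i = (TI, V, j)" "m + 1 \<le> l" "l \<le> d" "V \<in> Delta d l"
        "1 \<le> j" "j \<le> N m V"
    | (TII) V j l where "i = (TII, V, j)" "1 \<le> m" "m \<le> l" "l \<le> d" "V \<in> Delta d l"
        "1 \<le> j" "j \<le> N (m - 1) V"
  using assms unfolding dof_idx_def by blast

lemma dof_idx_TI_top: "V \<in> Delta d m \<Longrightarrow> (TI, V, 1) \<in> dof_idx d N m"
  unfolding dof_idx_def by blast

lemma dof_idx_TI_interior: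
  "V \<in> Delta d l \<Longrightarrow> m + 1 \<le> l \<Longrightarrow> l \<le> d \<Longrightarrow> 1 \<le> j \<Longrightarrow> j \<le> N m V \<Longrightarrow> (TI, V, j) \<in> dof_idx d N m"
  unfolding dof_idx_def by blast

lemma dof_TI:
  "dof p \<psi> m (TI, V, j) v = (if card V = Suc m then sint p V (\<lambda>x. v x (onb p V))
     else l2 p V (Suc m) (extd m (\<psi> m V j)) (extd m v))"
  by (simp add: dof_def)

lemma dof_TII_extd:
  assumes "1 \<le> m" "card V \<noteq> m"
  shows "dof p \<psi> m (TII, V, j) (extd (m - 1) \<phi>) = dof p \<psi> (m - 1) (TI, V, j) \<phi>"
  using assms by (simp add: dof_def)

lemma l2_zero_right: "l2 p V k a (\<lambda>x vs. 0) = 0"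
  by (simp add: l2_def finner_def sint_def Let_def)

lemma poly_complex_poly_form:
  assumes "poly_complex d X" "m \<le> d" "v \<in> X m"
  shows "poly_form m v"
  using assms unfolding poly_complex_def by simp

lemma poly_complex_extd_mem:
  assumes "poly_complex d X" "m < d" "v \<in> X m"
  shows "extd m v \<in> X (Suc m)"
proof -
  have "extd m ` X m \<subseteq> X (Suc m)"
    using assms(1,2) unfolding poly_complex_def by simp
  with assms(3) show ?thesis
    by blast
qed

lemma poly_complex_extd_extd:
  assumes "poly_complex d X" "1 \<le> m" "m \<le> d" "v \<in> X (m - 1)"
  shows "extd m (extd (m - 1) v) = (\<lambda>x vs. 0)"
proof -
  have "{w \<in> X m. extd m w = (\<lambda>x vs. 0)} = extd (m - 1) ` X (m - 1)"
    using assms(1-3) unfolding poly_complex_def by simp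
  with assms(4) show ?thesis
    by blast
qed
lemma dof_TI_extd_eq_zero:
  fixes p :: "nat \<Rightarrow> real^'n::finite" and \<phi> :: "'n form"
  assumes p: "ref_simplex p" and k: "k = 1 \<or> k = 2" and \<phi>: "poly_form (k - 1) \<phi>"
    and V: "V \<in> Delta CARD('n) k"
    and facets: "\<And>F. F \<in> Delta CARD('n) (k - 1) \<Longrightarrow> dof p \<psi> (k - 1) (TI, F, 1) \<phi> = 0"
  shows "dof p \<psi> k (TI, V, 1) (extd (k - 1) \<phi>) = 0"
proof -
  have V': "V \<subseteq> {..CARD('n)}" "card V = Suc k"
    using V by (simp_all add: Delta_def)
  have "inj_on p V"
    using p V' by (auto simp: ref_simplex_def intro: inj_on_subset)
  moreover have "\<not> affine_dependent (p ` V)"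
    by (rule affine_independent_subset[of "p ` {..CARD('n)}"])
       (use p V' in \<open>auto simp: ref_simplex_def\<close>)
  moreover have "sint p F (\<lambda>x. \<phi> x (onb p F)) = 0" if "F \<subseteq> V" "card F = k" for F
  proof -
    have "F \<in> Delta CARD('n) (k - 1)"
      using that V' k by (auto simp: Delta_def)
    then show ?thesis
      using facets[of F] that k by (auto simp: dof_TI)
  qed
  ultimately have "sint p V (\<lambda>x. extd (k - 1) \<phi> x (onb p V)) = 0"
    by (rule sint_extd_eq_zero[OF k \<phi> V'(2)])
  then show ?thesis
    using V'(2) by (simp add: dof_TI)
qed

theorem mainTheorem4:
  fixes p :: "nat \<Rightarrow> real^'n"
    and X :: "nat \<Rightarrow> 'n form set"
    and \<psi> :: "nat \<Rightarrow> nat set \<Rightarrow> nat \<Rightarrow> 'n form"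
    and N :: "nat \<Rightarrow> nat set \<Rightarrow> nat"
    and k l n :: nat and S :: "nat set"
  assumes "CARD('n) = 2 \<or> CARD('n) = 3"
    and "ref_simplex p"
    and "poly_complex CARD('n) X"
    and "\<forall>m<CARD('n). \<forall>l'. m < l' \<and> l' \<le> CARD('n) \<longrightarrow>
           (\<forall>V\<in>Delta CARD('n) l'. psi_basis p X m V (N m V) (\<psi> m V))"
    and "\<forall>m\<le>CARD('n). unisolvent p X \<psi> N m"
    and "1 \<le> k" and "k \<le> CARD('n) - 1"
    and "k \<le> l" and "l \<le> CARD('n)"
    and "S \<in> Delta CARD('n) l"
    and "1 \<le> n" and "n \<le> N (k - 1) S"
  shows "dual_basis p X \<psi> N k (TII, S, n) = extd (k - 1) (dual_basis p X \<psi> N (k - 1) (TI, S, n))"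
proof -
  define \<phi> where "\<phi> = dual_basis p X \<psi> N (k - 1) (TI, S, n)"
  have uni: "unisolvent p X \<psi> N (k - 1)" "unisolvent p X \<psi> N k"
    using assms(5,7) by auto
  have k: "k = 1 \<or> k = 2"
    using assms(1,6,7) by auto
  have \<phi>X: "\<phi> \<in> X (k - 1)"
    unfolding \<phi>_def by (rule dual_basis_mem[OF uni(1)])
  have \<phi>_dof: "dof p \<psi> (k - 1) i \<phi> = (if i = (TI, S, n) then 1 else 0)"
    if "i \<in> dof_idx CARD('n) N (k - 1)" for i
    unfolding \<phi>_def using dof_dual_basis[OF uni(1) that] .
  have "dual_basis p X \<psi> N k (TII, S, n) = extd (k - 1) \<phi>"
  proof (rule dual_basis_eqI[OF uni(2)])
    show "extd (k - 1) \<phi> \<in> X k"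
      using poly_complex_extd_mem[OF assms(3) _ \<phi>X] assms(6,7) by simp
  next
    fix i assume "i \<in> dof_idx CARD('n) N k"
    then show "dof p \<psi> k i (extd (k - 1) \<phi>) = (if i = (TII, S, n) then 1 else 0)"
    proof (cases rule: dof_idx_cases)
      case (TI_top V)
      \<comment> \<open>The facets of V have dimension k - 1 < l, so none of them is S.\<close>
      have "dof p \<psi> (k - 1) (TI, F, 1) \<phi> = 0" if "F \<in> Delta CARD('n) (k - 1)" for F
        using \<phi>_dof[OF dof_idx_TI_top[OF that]] that assms(8,10) k by (auto simp: Delta_def)
      then show ?thesis
        using dof_TI_extd_eq_zero[OF assms(2) k poly_complex_poly_form[OF assms(3) _ \<phi>X] TI_top(2)]
          TI_top(1) assms(7) by simp
    next
      case (TI_interior V j l')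
      have "extd k (extd (k - 1) \<phi>) = (\<lambda>x vs. 0)"
        using poly_complex_extd_extd[OF assms(3) _ _ \<phi>X] assms(6,7) by simp
      with TI_interior show ?thesis
        by (simp add: dof_TI l2_zero_right Delta_def)
    next
      case (TII V j l')
      have "(TI, V, j) \<in> dof_idx CARD('n) N (k - 1)"
        by (rule dof_idx_TI_interior) (use TII in auto)
      moreover have "dof p \<psi> k (TII, V, j) (extd (k - 1) \<phi>) = dof p \<psi> (k - 1) (TI, V, j) \<phi>"
        by (rule dof_TII_extd) (use TII in \<open>auto simp: Delta_def\<close>)
      ultimately show ?thesis
        using \<phi>_dof TII(1) by auto
    qed
  qed
  then show ?thesis
    by (simp add: \<phi>_def)
qed

end
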